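(* Let $G$ be a group, $R$ a unital ring and $E$ any directed graph. Then every standard $G$-grading of the Leavitt path algebra $L_R(E)$ is virtually epsilon-strong.
   Context: A directed graph $E=(E^0,E^1,s,r)$ has vertex set $E^0$, edge set $E^1$, source and range maps $s,r\colon E^1\to E^0$. The Leavitt path algebra $L_R(E)$ is the $R$-algebra generated by symbols $v$ ($v\in E^0$), $f,f^*$ ($f\in E^1$), with $R$ commuting with the generators, subject to: $uv=\delta_{u,v}u$; $s(f)f=fr(f)=f$ and $r(f)f^*=f^*s(f)=f^*$; $f^*f'=\delta_{f,f'}r(f)$; and $\sum_{f\in E^1,s(f)=v}ff^*=v$ for every $v$ with $s^{-1}(v)$ nonempty and finite. A standard $G$-grading: assign $\deg(v)=e$ for all $v\in E^0$, choose for each $f\in E^1$ some $\deg(f)\in G$ and set $\deg(f^* )=\deg(f)^{-1}$; this grades the free $R$-algebra on these symbols, the ideal of relations is homogeneous, and $L_R(E)$ receives the quotient grading. Rings are associative, not necessarily unital. A $G$-grading $S=\bigoplus_gS_g$ is virtually epsilon-strong if $S_gS_{g^{-1}}S_g=S_g$ for all $g$ and each ring $S_gS_{g^{-1}}$ has enough idempotents: there is a set $M$ of pairwise orthogonal commuting idempotents of it such that the set $\bigvee M$ of finite joins (equivalently finite sums) of elements of $M$ is a set of local units, i.e. for each $x$ there is $f\in\bigvee M$ with $fx=xf=x$. *)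

theory Defs
  imports "HOL-Algebra.Ring" "HOL-Library.Function_Algebras"
begin

text \<open>A ring is given as a HOL-Algebra ring record; the field one is ignored
(rings need not be unital).  All notions below only use carrier, add, mult, zero.\<close>

inductive_set set_prod :: "('a, 'm) ring_scheme \<Rightarrow> 'a set \<Rightarrow> 'a set \<Rightarrow> 'a set"
  for A :: "('a, 'm) ring_scheme" and X :: "'a set" and Y :: "'a set" where
  sp_zero: "\<zero>\<^bsub>A\<^esub> \<in> set_prod A X Y"
| sp_prod: "x \<in> X \<Longrightarrow> y \<in> Y \<Longrightarrow> x \<otimes>\<^bsub>A\<^esub> y \<in> set_prod A X Y"
| sp_add: "a \<in> set_prod A X Y \<Longrightarrow> b \<in> set_prod A X Y \<Longrightarrow> a \<oplus>\<^bsub>A\<^esub> b \<in> set_prod A X Y"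

definition joins :: "('a, 'm) ring_scheme \<Rightarrow> 'a set \<Rightarrow> 'a set" where
  "joins A M = {finsum A id F | F. finite F \<and> F \<subseteq> M}"

definition has_enough_idempotents :: "('a, 'm) ring_scheme \<Rightarrow> 'a set \<Rightarrow> bool" where
  "has_enough_idempotents A T \<longleftrightarrow>
     (\<exists>M. M \<subseteq> T
        \<and> (\<forall>e\<in>M. e \<otimes>\<^bsub>A\<^esub> e = e)
        \<and> (\<forall>e\<in>M. \<forall>f\<in>M. e \<noteq> f \<longrightarrow> e \<otimes>\<^bsub>A\<^esub> f = \<zero>\<^bsub>A\<^esub>)
        \<and> (\<forall>e\<in>M. \<forall>f\<in>M. e \<otimes>\<^bsub>A\<^esub> f = f \<otimes>\<^bsub>A\<^esub> e)
        \<and> (\<forall>x\<in>T. \<exists>f\<in>joins A M. f \<otimes>\<^bsub>A\<^esub> x = x \<and> x \<otimes>\<^bsub>A\<^esub> f = x))"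

definition virtually_epsilon_strong ::
  "('g, 'b) monoid_scheme \<Rightarrow> ('a, 'm) ring_scheme \<Rightarrow> ('g \<Rightarrow> 'a set) \<Rightarrow> bool" where
  "virtually_epsilon_strong G A S \<longleftrightarrow>
     (\<forall>g\<in>carrier G.
        set_prod A (set_prod A (S g) (S (inv\<^bsub>G\<^esub> g))) (S g) = S g
      \<and> has_enough_idempotents A (set_prod A (S g) (S (inv\<^bsub>G\<^esub> g))))"

text \<open>Generator symbols: vertices v, edges f, ghost edges f*.\<close>
datatype ('v, 'e) lgen = LV 'v | LE 'e | LG 'e

definition lgens :: "'v set \<Rightarrow> 'e set \<Rightarrow> ('v, 'e) lgen set" where
  "lgens E0 E1 = LV ` E0 \<union> LE ` E1 \<union> LG ` E1"

text \<open>The free (non-unital) R-algebra on the symbols: finitely supported R-valued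
functions on nonempty words in the generators.\<close>
definition free_alg :: "'v set \<Rightarrow> 'e set \<Rightarrow> (('v, 'e) lgen list \<Rightarrow> 'r::{ring, monoid_mult}) set" where
  "free_alg E0 E1 = {f. finite {w. f w \<noteq> 0} \<and> (\<forall>w. f w \<noteq> 0 \<longrightarrow> w \<noteq> [] \<and> set w \<subseteq> lgens E0 E1)}"

definition fa_mult :: "('x list \<Rightarrow> 'r::{ring, monoid_mult}) \<Rightarrow> ('x list \<Rightarrow> 'r) \<Rightarrow> ('x list \<Rightarrow> 'r)" where
  "fa_mult f h = (\<lambda>w. \<Sum>i\<le>length w. f (take i w) * h (drop i w))"

definition monom :: "'x list \<Rightarrow> ('x list \<Rightarrow> 'r::{ring, monoid_mult})" where
  "monom w = (\<lambda>x. if x = w then 1 else 0)"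

text \<open>The defining relations of L_R(E), written as elements x of the free algebra (x = 0).\<close>
definition lpa_rels :: "'v set \<Rightarrow> 'e set \<Rightarrow> ('e \<Rightarrow> 'v) \<Rightarrow> ('e \<Rightarrow> 'v)
    \<Rightarrow> (('v, 'e) lgen list \<Rightarrow> 'r::{ring, monoid_mult}) set" where
  "lpa_rels E0 E1 s r =
     {monom [LV u, LV v] - (if u = v then monom [LV u] else 0) | u v. u \<in> E0 \<and> v \<in> E0}
   \<union> {monom [LV (s f), LE f] - monom [LE f] | f. f \<in> E1}
   \<union> {monom [LE f, LV (r f)] - monom [LE f] | f. f \<in> E1}
   \<union> {monom [LV (r f), LG f] - monom [LG f] | f. f \<in> E1}
   \<union> {monom [LG f, LV (s f)] - monom [LG f] | f. f \<in> E1}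
   \<union> {monom [LG f, LE f'] - (if f = f' then monom [LV (r f)] else 0) | f f'. f \<in> E1 \<and> f' \<in> E1}
   \<union> {(\<Sum>f\<in>{f\<in>E1. s f = v}. monom [LE f, LG f]) - monom [LV v] | v.
        v \<in> E0 \<and> {f\<in>E1. s f = v} \<noteq> {} \<and> finite {f\<in>E1. s f = v}}"

inductive_set lpa_ideal :: "'v set \<Rightarrow> 'e set \<Rightarrow> ('e \<Rightarrow> 'v) \<Rightarrow> ('e \<Rightarrow> 'v)
    \<Rightarrow> (('v, 'e) lgen list \<Rightarrow> 'r::{ring, monoid_mult}) set"
  for E0 E1 s r where
  li_rel: "x \<in> lpa_rels E0 E1 s r \<Longrightarrow> x \<in> lpa_ideal E0 E1 s r"
| li_zero: "0 \<in> lpa_ideal E0 E1 s r"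
| li_add: "x \<in> lpa_ideal E0 E1 s r \<Longrightarrow> y \<in> lpa_ideal E0 E1 s r \<Longrightarrow> x + y \<in> lpa_ideal E0 E1 s r"
| li_lsmult: "x \<in> lpa_ideal E0 E1 s r \<Longrightarrow> (\<lambda>w. c * x w) \<in> lpa_ideal E0 E1 s r"
| li_rsmult: "x \<in> lpa_ideal E0 E1 s r \<Longrightarrow> (\<lambda>w. x w * c) \<in> lpa_ideal E0 E1 s r"
| li_lmult: "x \<in> lpa_ideal E0 E1 s r \<Longrightarrow> a \<in> free_alg E0 E1 \<Longrightarrow> fa_mult a x \<in> lpa_ideal E0 E1 s r"
| li_rmult: "x \<in> lpa_ideal E0 E1 s r \<Longrightarrow> a \<in> free_alg E0 E1 \<Longrightarrow> fa_mult x a \<in> lpa_ideal E0 E1 s r"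

definition lclass :: "'v set \<Rightarrow> 'e set \<Rightarrow> ('e \<Rightarrow> 'v) \<Rightarrow> ('e \<Rightarrow> 'v)
    \<Rightarrow> (('v, 'e) lgen list \<Rightarrow> 'r::{ring, monoid_mult}) \<Rightarrow> (('v, 'e) lgen list \<Rightarrow> 'r) set" where
  "lclass E0 E1 s r f = {h \<in> free_alg E0 E1. h - f \<in> lpa_ideal E0 E1 s r}"

text \<open>The Leavitt path algebra L_R(E) as the quotient ring (one is unused: L_R(E) need not be unital).\<close>
definition lpa :: "'v set \<Rightarrow> 'e set \<Rightarrow> ('e \<Rightarrow> 'v) \<Rightarrow> ('e \<Rightarrow> 'v)
    \<Rightarrow> (('v, 'e) lgen list \<Rightarrow> 'r::{ring, monoid_mult}) set ring" where
  "lpa E0 E1 s r =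
    \<lparr> carrier = lclass E0 E1 s r ` free_alg E0 E1,
      mult = (\<lambda>X Y. lclass E0 E1 s r (fa_mult (SOME f. f \<in> X) (SOME h. h \<in> Y))),
      one = undefined,
      zero = lclass E0 E1 s r 0,
      add = (\<lambda>X Y. lclass E0 E1 s r ((SOME f. f \<in> X) + (SOME h. h \<in> Y))) \<rparr>"

fun gen_deg :: "('g, 'b) monoid_scheme \<Rightarrow> ('e \<Rightarrow> 'g) \<Rightarrow> ('v, 'e) lgen \<Rightarrow> 'g" where
  "gen_deg G d (LV v) = \<one>\<^bsub>G\<^esub>"
| "gen_deg G d (LE f) = d f"
| "gen_deg G d (LG f) = inv\<^bsub>G\<^esub> (d f)"

definition word_deg :: "('g, 'b) monoid_scheme \<Rightarrow> ('e \<Rightarrow> 'g) \<Rightarrow> ('v, 'e) lgen list \<Rightarrow> 'g" where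
  "word_deg G d w = foldr (\<lambda>a x. gen_deg G d a \<otimes>\<^bsub>G\<^esub> x) w \<one>\<^bsub>G\<^esub>"

definition lpa_comp :: "('g, 'b) monoid_scheme \<Rightarrow> 'v set \<Rightarrow> 'e set \<Rightarrow> ('e \<Rightarrow> 'v) \<Rightarrow> ('e \<Rightarrow> 'v)
    \<Rightarrow> ('e \<Rightarrow> 'g) \<Rightarrow> 'g \<Rightarrow> (('v, 'e) lgen list \<Rightarrow> 'r::{ring, monoid_mult}) set set" where
  "lpa_comp G E0 E1 s r d g =
     lclass E0 E1 s r ` {f \<in> free_alg E0 E1. \<forall>w. f w \<noteq> 0 \<longrightarrow> word_deg G d w = g}"

end

theory Submission
  imports Defs "HOL-Library.Sublist"
begin

text \<open>Modulo the defining relations, every nonzero monomial of \<open>L\<^sub>R(E)\<close> is congruent to a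
  normal form \<open>a b\<^sup>*\<close> of the same degree, where \<open>a\<close>, \<open>b\<close> are paths with a common end
  vertex, and \<open>a b\<^sup>* \<cdot> b c\<^sup>* = a c\<^sup>*\<close>. So a homogeneous monomial \<open>x = a b\<^sup>*\<close> of degree
  \<open>g\<close> factors as \<open>x (b a\<^sup>*) x\<close> with \<open>b a\<^sup>*\<close> of degree \<open>g\<inverse>\<close>, whence
  \<open>S(g) S(g\<inverse>) S(g) = S(g)\<close>.

  For the local units of \<open>S(g) S(g\<inverse>)\<close>, call \<open>a\<close> a head of degree \<open>g\<close> if some \<open>a b\<^sup>*\<close> has
  degree \<open>g\<close>, and let \<open>M\<close> consist of the idempotents \<open>m m\<^sup>*\<close> for the prefix-minimal heads
  \<open>m\<close>. Distinct minimal heads are incomparable, so \<open>m m\<^sup>* m' m'\<^sup>* = 0\<close>. A monomial \<open>a b\<^sup>*\<close>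
  of degree \<open>g\<close> is fixed on the left by \<open>m m\<^sup>*\<close> for the minimal head \<open>m\<close> below \<open>a\<close>, and a
  monomial of degree \<open>g\<inverse>\<close> is fixed on the right in the same way; finite sums of these
  idempotents then serve for all of \<open>S(g) S(g\<inverse>)\<close>.\<close>

section \<open>Non-unital rings and local units\<close>

lemma set_prod_subset:
  assumes "\<zero>\<^bsub>A\<^esub> \<in> Z" "\<And>a b. a \<in> Z \<Longrightarrow> b \<in> Z \<Longrightarrow> a \<oplus>\<^bsub>A\<^esub> b \<in> Z"
    and "\<And>x y. x \<in> X \<Longrightarrow> y \<in> Y \<Longrightarrow> x \<otimes>\<^bsub>A\<^esub> y \<in> Z"
  shows "set_prod A X Y \<subseteq> Z"
proof
  fix z assume "z \<in> set_prod A X Y"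
  then show "z \<in> Z" by induction (use assms in auto)
qed

locale nonunital_ring = abelian_monoid R for R (structure) +
  assumes m_closed [simp]: "\<lbrakk>x \<in> carrier R; y \<in> carrier R\<rbrakk> \<Longrightarrow> x \<otimes> y \<in> carrier R"
    and m_assoc: "\<lbrakk>x \<in> carrier R; y \<in> carrier R; z \<in> carrier R\<rbrakk> \<Longrightarrow> (x \<otimes> y) \<otimes> z = x \<otimes> (y \<otimes> z)"
    and l_distr: "\<lbrakk>x \<in> carrier R; y \<in> carrier R; z \<in> carrier R\<rbrakk> \<Longrightarrow> (x \<oplus> y) \<otimes> z = x \<otimes> z \<oplus> y \<otimes> z"
    and r_distr: "\<lbrakk>x \<in> carrier R; y \<in> carrier R; z \<in> carrier R\<rbrakk> \<Longrightarrow> z \<otimes> (x \<oplus> y) = z \<otimes> x \<oplus> z \<otimes> y"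
    and l_null [simp]: "x \<in> carrier R \<Longrightarrow> \<zero> \<otimes> x = \<zero>"
    and r_null [simp]: "x \<in> carrier R \<Longrightarrow> x \<otimes> \<zero> = \<zero>"
begin

definition orthogonal_idempotents :: "'a set \<Rightarrow> bool" where
  "orthogonal_idempotents M \<longleftrightarrow> M \<subseteq> carrier R \<and> (\<forall>e\<in>M. e \<otimes> e = e)
     \<and> (\<forall>e\<in>M. \<forall>f\<in>M. e \<noteq> f \<longrightarrow> e \<otimes> f = \<zero>)"

definition has_left_local_unit :: "'a set \<Rightarrow> 'a \<Rightarrow> bool" where
  "has_left_local_unit M x \<longleftrightarrow> (\<exists>f\<in>joins R M. f \<otimes> x = x)"

definition has_right_local_unit :: "'a set \<Rightarrow> 'a \<Rightarrow> bool" where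
  "has_right_local_unit M x \<longleftrightarrow> (\<exists>f\<in>joins R M. x \<otimes> f = x)"

definition has_local_unit :: "'a set \<Rightarrow> 'a \<Rightarrow> bool" where
  "has_local_unit M x \<longleftrightarrow> (\<exists>f\<in>joins R M. f \<otimes> x = x \<and> x \<otimes> f = x)"

lemma finsum_self_closed: "F \<subseteq> carrier R \<Longrightarrow> (\<Oplus>a\<in>F. a) \<in> carrier R"
  by (rule finsum_closed) auto

text \<open>Finite joins are handled as \<open>\<Oplus>a\<in>F. a\<close> rather than \<open>finsum R id F\<close>: the simplifier
  eta-expands \<open>id\<close> inside \<open>finsum\<close> via \<open>id_apply\<close>.\<close>
lemma joins_eq: "joins R M = {(\<Oplus>a\<in>F. a) | F. finite F \<and> F \<subseteq> M}"
  by (simp add: joins_def id_def)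

lemma zero_in_joins: "\<zero> \<in> joins R M"
  unfolding joins_eq by (rule CollectI, rule exI[of _ "{}"]) simp

lemma in_joins_singleton: "e \<in> M \<Longrightarrow> e \<in> carrier R \<Longrightarrow> e \<in> joins R M"
  unfolding joins_eq by (rule CollectI, rule exI[of _ "{e}"]) simp

lemma has_left_local_unit_zero: "has_left_local_unit M \<zero>"
  unfolding has_left_local_unit_def by (intro bexI[OF _ zero_in_joins]) simp

lemma has_right_local_unit_zero: "has_right_local_unit M \<zero>"
  unfolding has_right_local_unit_def by (intro bexI[OF _ zero_in_joins]) simp

lemma has_local_unit_zero: "has_local_unit M \<zero>"
  unfolding has_local_unit_def by (intro bexI[OF _ zero_in_joins]) simp

context
  fixes M assumes M: "orthogonal_idempotents M"
begin

lemma orthogonal_idempotents_carrier: "M \<subseteq> carrier R"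
  using M by (simp add: orthogonal_idempotents_def)

lemma joins_closed: "f \<in> joins R M \<Longrightarrow> f \<in> carrier R"
  using orthogonal_idempotents_carrier finsum_self_closed unfolding joins_eq by blast

lemma finsum_self_insert:
  "\<lbrakk>finite F; F \<subseteq> M; e \<in> M; e \<notin> F\<rbrakk> \<Longrightarrow> (\<Oplus>a\<in>insert e F. a) = e \<oplus> (\<Oplus>a\<in>F. a)"
  using orthogonal_idempotents_carrier by (subst finsum_insert) auto

lemma finsum_self_mult_idempotent:
  assumes "finite F" "F \<subseteq> M" "e \<in> M"
  shows "(\<Oplus>a\<in>F. a) \<otimes> e = (if e \<in> F then e else \<zero>) \<and> e \<otimes> (\<Oplus>a\<in>F. a) = (if e \<in> F then e else \<zero>)"
  using assms(1,2)
proof (induct F rule: finite_induct)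
  case empty
  then show ?case using assms(3) orthogonal_idempotents_carrier by auto
next
  case (insert f F)
  have "e \<in> carrier R" "f \<in> carrier R" "(\<Oplus>a\<in>F. a) \<in> carrier R"
    using insert.prems assms(3) orthogonal_idempotents_carrier finsum_self_closed by blast+
  moreover have "f \<otimes> e = (if e = f then e else \<zero>) \<and> e \<otimes> f = (if e = f then e else \<zero>)"
    using M insert.prems assms(3) by (auto simp: orthogonal_idempotents_def)
  ultimately show ?case
    using insert by (auto simp: finsum_self_insert l_distr r_distr)
qed

lemma finsum_self_mult_subset:
  assumes "finite F'" "F' \<subseteq> M" "F \<subseteq> F'"
  shows "(\<Oplus>a\<in>F'. a) \<otimes> (\<Oplus>a\<in>F. a) = (\<Oplus>a\<in>F. a) \<and> (\<Oplus>a\<in>F. a) \<otimes> (\<Oplus>a\<in>F'. a) = (\<Oplus>a\<in>F. a)"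
proof -
  have "finite F" using assms finite_subset by blast
  then show ?thesis using assms(3)
  proof (induct F rule: finite_induct)
    case empty
    have "(\<Oplus>a\<in>F'. a) \<in> carrier R"
      using assms(2) orthogonal_idempotents_carrier finsum_self_closed by blast
    then show ?case by (simp only: finsum_empty l_null r_null simp_thms)
  next
    case (insert f F)
    have "f \<in> carrier R" "(\<Oplus>a\<in>F. a) \<in> carrier R" "(\<Oplus>a\<in>F'. a) \<in> carrier R"
      using insert.prems assms(2) orthogonal_idempotents_carrier finsum_self_closed
      by (meson insert_subset subset_trans)+
    moreover have "f \<in> M" "F \<subseteq> M"
      using insert.prems assms(2) by auto
    ultimately show ?case
      using insert finsum_self_mult_idempotent[OF assms(1,2), of f]
      by (auto simp: finsum_self_insert l_distr r_distr)
  qed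
qed

lemma joins_upper_bound:
  assumes "f1 \<in> joins R M" "f2 \<in> joins R M"
  obtains f where "f \<in> joins R M" "f \<otimes> f1 = f1" "f1 \<otimes> f = f1" "f \<otimes> f2 = f2" "f2 \<otimes> f = f2"
proof -
  obtain F1 F2 where F: "finite F1" "F1 \<subseteq> M" "f1 = (\<Oplus>a\<in>F1. a)" "finite F2" "F2 \<subseteq> M" "f2 = (\<Oplus>a\<in>F2. a)"
    using assms unfolding joins_eq by blast
  have "(\<Oplus>a\<in>F1 \<union> F2. a) \<in> joins R M" using F unfolding joins_eq by blast
  with that show thesis
    using finsum_self_mult_subset[of "F1 \<union> F2" F1] finsum_self_mult_subset[of "F1 \<union> F2" F2] F by auto
qed

lemma has_left_local_unit_add:
  assumes "x \<in> carrier R" "y \<in> carrier R" "has_left_local_unit M x" "has_left_local_unit M y"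
  shows "has_left_local_unit M (x \<oplus> y)"
proof -
  obtain f1 f2 where f12: "f1 \<in> joins R M" "f1 \<otimes> x = x" "f2 \<in> joins R M" "f2 \<otimes> y = y"
    using assms(3,4) unfolding has_left_local_unit_def by blast
  then obtain f where f: "f \<in> joins R M" "f \<otimes> f1 = f1" "f \<otimes> f2 = f2"
    using joins_upper_bound by metis
  then have "f \<otimes> x = x" "f \<otimes> y = y"
    using f12 assms(1,2) joins_closed by (metis m_assoc)+
  then show ?thesis
    unfolding has_left_local_unit_def using f assms(1,2) joins_closed by (metis r_distr)
qed

lemma has_right_local_unit_add:
  assumes "x \<in> carrier R" "y \<in> carrier R" "has_right_local_unit M x" "has_right_local_unit M y"
  shows "has_right_local_unit M (x \<oplus> y)"
proof -
  obtain f1 f2 where f12: "f1 \<in> joins R M" "x \<otimes> f1 = x" "f2 \<in> joins R M" "y \<otimes> f2 = y"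
    using assms(3,4) unfolding has_right_local_unit_def by blast
  then obtain f where f: "f \<in> joins R M" "f1 \<otimes> f = f1" "f2 \<otimes> f = f2"
    using joins_upper_bound by metis
  then have "x \<otimes> f = x" "y \<otimes> f = y"
    using f12 assms(1,2) joins_closed by (metis m_assoc)+
  then show ?thesis
    unfolding has_right_local_unit_def using f assms(1,2) joins_closed by (metis l_distr)
qed

lemma has_local_unit_add:
  assumes "x \<in> carrier R" "y \<in> carrier R" "has_local_unit M x" "has_local_unit M y"
  shows "has_local_unit M (x \<oplus> y)"
proof -
  obtain f1 f2 where f12: "f1 \<in> joins R M" "f1 \<otimes> x = x" "x \<otimes> f1 = x"
    "f2 \<in> joins R M" "f2 \<otimes> y = y" "y \<otimes> f2 = y"
    using assms(3,4) unfolding has_local_unit_def by blast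
  then obtain f where f: "f \<in> joins R M" "f \<otimes> f1 = f1" "f1 \<otimes> f = f1" "f \<otimes> f2 = f2" "f2 \<otimes> f = f2"
    using joins_upper_bound by metis
  then have "f \<otimes> x = x" "f \<otimes> y = y" "x \<otimes> f = x" "y \<otimes> f = y"
    using f12 assms(1,2) joins_closed by (metis m_assoc)+
  then show ?thesis
    unfolding has_local_unit_def using f assms(1,2) joins_closed by (metis l_distr r_distr)
qed

lemma has_local_unit_mult:
  assumes "x \<in> carrier R" "y \<in> carrier R" "has_left_local_unit M x" "has_right_local_unit M y"
  shows "has_local_unit M (x \<otimes> y)"
proof -
  obtain f1 f2 where f12: "f1 \<in> joins R M" "f1 \<otimes> x = x" "f2 \<in> joins R M" "y \<otimes> f2 = y"
    using assms(3,4) unfolding has_left_local_unit_def has_right_local_unit_def by blast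
  then obtain f where f: "f \<in> joins R M" "f \<otimes> f1 = f1" "f2 \<otimes> f = f2"
    using joins_upper_bound by metis
  then have "f \<otimes> x = x" "y \<otimes> f = y"
    using f12 assms(1,2) joins_closed by (metis m_assoc)+
  then show ?thesis
    unfolding has_local_unit_def using f assms(1,2) joins_closed by (metis m_assoc)
qed

lemma set_prod_has_local_unit:
  assumes "X \<subseteq> carrier R" "Y \<subseteq> carrier R"
    and "\<And>x. x \<in> X \<Longrightarrow> has_left_local_unit M x" "\<And>y. y \<in> Y \<Longrightarrow> has_right_local_unit M y"
    and "z \<in> set_prod R X Y"
  shows "has_local_unit M z"
proof -
  have "set_prod R X Y \<subseteq> {z \<in> carrier R. has_local_unit M z}"
  proof (rule set_prod_subset)
    fix x y assume "x \<in> X" "y \<in> Y"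
    moreover from this have "x \<in> carrier R" "y \<in> carrier R"
      using assms(1,2) by auto
    ultimately show "x \<otimes> y \<in> {z \<in> carrier R. has_local_unit M z}"
      using assms(3,4) has_local_unit_mult by simp
  qed (auto simp: has_local_unit_zero has_local_unit_add)
  then show ?thesis using assms(5) by blast
qed

lemma has_enough_idempotentsI:
  assumes "M \<subseteq> T" "\<And>x. x \<in> T \<Longrightarrow> has_local_unit M x"
  shows "has_enough_idempotents R T"
  unfolding has_enough_idempotents_def
proof (intro exI[of _ M] conjI ballI)
  show "M \<subseteq> T" by (fact assms(1))
  fix e f assume "e \<in> M" "f \<in> M"
  then show "e \<otimes> e = e" "e \<noteq> f \<longrightarrow> e \<otimes> f = \<zero>" "e \<otimes> f = f \<otimes> e"
    using M unfolding orthogonal_idempotents_def by metis+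
next
  fix x assume "x \<in> T"
  then show "\<exists>f\<in>joins R M. f \<otimes> x = x \<and> x \<otimes> f = x"
    using assms(2) unfolding has_local_unit_def by blast
qed

end

end

definition smonom :: "'r::{ring, monoid_mult} \<Rightarrow> 'x list \<Rightarrow> ('x list \<Rightarrow> 'r)" where
  "smonom c w = (\<lambda>x. if x = w then c else 0)"

lemma monom_eq_smonom: "monom w = smonom 1 w"
  by (simp add: monom_def smonom_def)

lemma smonom_zero [simp]: "smonom 0 w = 0"
  by (auto simp: smonom_def)

lemma smonom_eq_scale_monom: "smonom c w = (\<lambda>x. c * monom w x)"
  by (auto simp: smonom_def monom_def)

lemma fa_mult_smonom: "fa_mult (smonom a u) (smonom b v) = smonom (a * b) (u @ v)"
proof
  fix x :: "'a list"
  have "fa_mult (smonom a u) (smonom b v) x = (\<Sum>i\<le>length x. if i = length u \<and> x = u @ v then a * b else 0)"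
    unfolding fa_mult_def smonom_def
  proof (rule sum.cong[OF refl])
    fix i assume "i \<in> {..length x}"
    then show "(if take i x = u then a else 0) * (if drop i x = v then b else 0) =
      (if i = length u \<and> x = u @ v then a * b else 0)"
      by (auto simp: min_def split: if_splits)
  qed
  also have "\<dots> = smonom (a * b) (u @ v) x"
    by (auto simp: smonom_def)
  finally show "fa_mult (smonom a u) (smonom b v) x = smonom (a * b) (u @ v) x" .
qed

lemma fa_mult_monom: "fa_mult (monom u) (monom v) = monom (u @ v)"
  by (simp add: monom_eq_smonom fa_mult_smonom)

lemma fa_mult_zero_left [simp]: "fa_mult 0 h = 0"
  by (auto simp: fa_mult_def)

lemma fa_mult_zero_right [simp]: "fa_mult h 0 = 0"
  by (auto simp: fa_mult_def)

lemma fa_mult_add_left: "fa_mult (f + g) h = fa_mult f h + fa_mult g h"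
  by (auto simp: fa_mult_def distrib_right sum.distrib)

lemma fa_mult_add_right: "fa_mult f (g + h) = fa_mult f g + fa_mult f h"
  by (auto simp: fa_mult_def distrib_left sum.distrib)

lemma fa_mult_diff_left: "fa_mult (f - g) h = fa_mult f h - fa_mult g h"
  by (auto simp: fa_mult_def left_diff_distrib sum_subtractf)

lemma fa_mult_diff_right: "fa_mult f (g - h) = fa_mult f g - fa_mult f h"
  by (auto simp: fa_mult_def right_diff_distrib sum_subtractf)

lemma fa_mult_nonzero_split:
  assumes "fa_mult f g w \<noteq> 0"
  obtains i where "f (take i w) \<noteq> 0" "g (drop i w) \<noteq> 0"
proof -
  have "\<exists>i\<le>length w. f (take i w) * g (drop i w) \<noteq> 0"
    using assms unfolding fa_mult_def by (meson sum.neutral atMost_iff)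
  then show thesis using that by (metis mult_zero_left mult_zero_right)
qed

lemma free_alg_zero [simp]: "0 \<in> free_alg E0 E1"
  by (auto simp: free_alg_def)

lemma free_alg_add [simp]:
  assumes "f \<in> free_alg E0 E1" "g \<in> free_alg E0 E1"
  shows "f + g \<in> free_alg E0 E1"
proof -
  have "{w. (f + g) w \<noteq> 0} \<subseteq> {w. f w \<noteq> 0} \<union> {w. g w \<noteq> 0}" by auto
  then show ?thesis using assms unfolding free_alg_def by (auto intro: finite_subset)
qed

lemma free_alg_lsmult [simp]:
  assumes "f \<in> free_alg E0 E1" shows "(\<lambda>w. c * f w) \<in> free_alg E0 E1"
proof -
  have "{w. c * f w \<noteq> 0} \<subseteq> {w. f w \<noteq> 0}" by auto
  then show ?thesis using assms unfolding free_alg_def by (auto intro: finite_subset)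
qed

lemma free_alg_rsmult [simp]:
  assumes "f \<in> free_alg E0 E1" shows "(\<lambda>w. f w * c) \<in> free_alg E0 E1"
proof -
  have "{w. f w * c \<noteq> 0} \<subseteq> {w. f w \<noteq> 0}" by auto
  then show ?thesis using assms unfolding free_alg_def by (auto intro: finite_subset)
qed

lemma free_alg_uminus [simp]: "f \<in> free_alg E0 E1 \<Longrightarrow> - f \<in> free_alg E0 E1"
  by (auto simp: free_alg_def)

lemma free_alg_diff [simp]: "f \<in> free_alg E0 E1 \<Longrightarrow> g \<in> free_alg E0 E1 \<Longrightarrow> f - g \<in> free_alg E0 E1"
  using free_alg_add[of f E0 E1 "- g"] by simp

lemma free_alg_smonom [simp]: "w \<noteq> [] \<Longrightarrow> set w \<subseteq> lgens E0 E1 \<Longrightarrow> smonom c w \<in> free_alg E0 E1"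
  unfolding free_alg_def smonom_def by (auto intro: finite_subset[of _ "{w}"])

lemma free_alg_monom [simp]: "w \<noteq> [] \<Longrightarrow> set w \<subseteq> lgens E0 E1 \<Longrightarrow> monom w \<in> free_alg E0 E1"
  by (simp add: monom_eq_smonom)

lemma free_alg_sum: "(\<And>a. a \<in> A \<Longrightarrow> f a \<in> free_alg E0 E1) \<Longrightarrow> sum f A \<in> free_alg E0 E1"
  by (induction A rule: infinite_finite_induct) auto

lemma free_alg_mult [simp]:
  assumes f: "f \<in> free_alg E0 E1" and g: "g \<in> free_alg E0 E1"
  shows "fa_mult f g \<in> free_alg E0 E1"
proof -
  have "{w. fa_mult f g w \<noteq> 0} \<subseteq> (\<lambda>(a, b). a @ b) ` ({w. f w \<noteq> 0} \<times> {w. g w \<noteq> 0})"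
  proof
    fix w assume "w \<in> {w. fa_mult f g w \<noteq> 0}"
    then obtain i where "f (take i w) \<noteq> 0" "g (drop i w) \<noteq> 0"
      using fa_mult_nonzero_split by blast
    then show "w \<in> (\<lambda>(a, b). a @ b) ` ({w. f w \<noteq> 0} \<times> {w. g w \<noteq> 0})"
      by (auto intro!: image_eqI[where x="(take i w, drop i w)"])
  qed
  moreover have "finite ((\<lambda>(a, b). a @ b) ` ({w. f w \<noteq> 0} \<times> {w. g w \<noteq> 0}))"
    using f g by (auto simp: free_alg_def)
  moreover have "w \<noteq> [] \<and> set w \<subseteq> lgens E0 E1" if nz: "fa_mult f g w \<noteq> 0" for w
  proof -
    obtain i where "f (take i w) \<noteq> 0" "g (drop i w) \<noteq> 0"
      using fa_mult_nonzero_split[OF nz] by blast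
    then have "take i w \<noteq> []" "set (take i w) \<subseteq> lgens E0 E1" "set (drop i w) \<subseteq> lgens E0 E1"
      using f g by (auto simp: free_alg_def)
    then show ?thesis
      by (metis append_take_drop_id le_sup_iff set_append take_Nil)
  qed
  ultimately show ?thesis unfolding free_alg_def by (auto intro: finite_subset)
qed

lemma free_alg_induct [consumes 1, case_names zero add_smonom]:
  assumes "p \<in> free_alg E0 E1"
    and "P 0"
    and "\<And>q c w. q \<in> free_alg E0 E1 \<Longrightarrow> P q \<Longrightarrow> w \<noteq> [] \<Longrightarrow> set w \<subseteq> lgens E0 E1
          \<Longrightarrow> q w = 0 \<Longrightarrow> P (q + smonom c w)"
  shows "P p"
proof -
  have "P p" if "p \<in> free_alg E0 E1" "card {w. p w \<noteq> 0} = n" for p n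
    using that
  proof (induction n arbitrary: p)
    case 0
    then have "p = 0" by (auto simp: free_alg_def)
    then show ?case using assms(2) by metis
  next
    case (Suc n)
    then have "{w. p w \<noteq> 0} \<noteq> {}" by (metis card.empty Zero_not_Suc)
    then obtain w where w: "p w \<noteq> 0" by auto
    define q where "q = p - smonom (p w) w"
    have fin: "finite {w. p w \<noteq> 0}" using Suc.prems by (auto simp: free_alg_def)
    have supp_q: "{x. q x \<noteq> 0} = {x. p x \<noteq> 0} - {w}"
      by (auto simp: q_def smonom_def)
    have q: "q \<in> free_alg E0 E1"
      using Suc.prems fin supp_q unfolding free_alg_def by auto
    have "card {x. q x \<noteq> 0} = n" using Suc.prems fin w by (simp add: supp_q)
    then have "P q" using Suc.IH q by blast
    moreover have "w \<noteq> [] \<and> set w \<subseteq> lgens E0 E1" using Suc.prems w by (auto simp: free_alg_def)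
    moreover have "q w = 0" by (simp add: q_def smonom_def)
    moreover have "p = q + smonom (p w) w" by (simp add: q_def)
    ultimately show ?case using assms(3)[of q w "p w"] q by simp
  qed
  then show ?thesis using assms(1) by blast
qed

lemma fa_mult_assoc:
  assumes "f \<in> free_alg E0 E1" "g \<in> free_alg E0 E1" "h \<in> free_alg E0 E1"
  shows "fa_mult (fa_mult f g) h = fa_mult f (fa_mult g h)"
  using assms
proof (induction f rule: free_alg_induct)
  case (add_smonom f' a u)
  have "fa_mult (fa_mult (smonom a u) g) h = fa_mult (smonom a u) (fa_mult g h)"
    using \<open>g \<in> free_alg E0 E1\<close>
  proof (induction g rule: free_alg_induct)
    case (add_smonom g' b v)
    have "fa_mult (fa_mult (smonom a u) (smonom b v)) h = fa_mult (smonom a u) (fa_mult (smonom b v) h)"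
      using \<open>h \<in> free_alg E0 E1\<close>
    proof (induction h rule: free_alg_induct)
      case (add_smonom h' c w)
      then show ?case by (simp only: fa_mult_add_right fa_mult_smonom mult.assoc append_assoc)
    qed (simp add: fa_mult_def)
    then show ?case using add_smonom by (simp only: fa_mult_add_right fa_mult_add_left)
  qed (simp add: fa_mult_def)
  then show ?case using add_smonom by (simp only: fa_mult_add_left)
qed (simp add: fa_mult_def)

lemma lpa_rels_subset_free_alg:
  "s ` E1 \<subseteq> E0 \<Longrightarrow> r ` E1 \<subseteq> E0 \<Longrightarrow> lpa_rels E0 E1 s r \<subseteq> free_alg E0 E1"
  unfolding lpa_rels_def
  by (auto simp: lgens_def image_subset_iff intro!: free_alg_diff free_alg_monom free_alg_sum)

lemma lpa_ideal_in_free_alg: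
  "x \<in> lpa_ideal E0 E1 s r \<Longrightarrow> s ` E1 \<subseteq> E0 \<Longrightarrow> r ` E1 \<subseteq> E0 \<Longrightarrow> x \<in> free_alg E0 E1"
  by (induction x rule: lpa_ideal.induct) (auto intro: lpa_rels_subset_free_alg[THEN subsetD])

lemma lpa_ideal_uminus: "x \<in> lpa_ideal E0 E1 s r \<Longrightarrow> - x \<in> lpa_ideal E0 E1 s r"
  using li_lsmult[of x E0 E1 s r "-1"] by (simp add: fun_Compl_def)

lemma lpa_ideal_diff:
  "x \<in> lpa_ideal E0 E1 s r \<Longrightarrow> y \<in> lpa_ideal E0 E1 s r \<Longrightarrow> x - y \<in> lpa_ideal E0 E1 s r"
  using li_add[OF _ lpa_ideal_uminus, of x E0 E1 s r y] by simp

section \<open>Leavitt path algebras as quotients\<close>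

text \<open>The parameter \<open>I\<close>, pinned down by \<open>ideal_eq\<close>, only serves to fix the coefficient
  type \<open>'r\<close> throughout the locale.\<close>
locale leavitt_graph =
  fixes E0 :: "'v set" and E1 :: "'e set" and s r :: "'e \<Rightarrow> 'v"
    and I :: "(('v, 'e) lgen list \<Rightarrow> 'r::{ring, monoid_mult}) set"
  assumes source_closed: "s ` E1 \<subseteq> E0" and range_closed: "r ` E1 \<subseteq> E0"
    and ideal_eq: "I = lpa_ideal E0 E1 s r"
begin

abbreviation L :: "(('v, 'e) lgen list \<Rightarrow> 'r) set ring" where
  "L \<equiv> lpa E0 E1 s r"

abbreviation cl :: "(('v, 'e) lgen list \<Rightarrow> 'r) \<Rightarrow> (('v, 'e) lgen list \<Rightarrow> 'r) set" where
  "cl \<equiv> lclass E0 E1 s r"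

lemma source_in [simp]: "e \<in> E1 \<Longrightarrow> s e \<in> E0"
  using source_closed by auto

lemma range_in [simp]: "e \<in> E1 \<Longrightarrow> r e \<in> E0"
  using range_closed by auto

lemma ideal_in_free_alg: "x \<in> I \<Longrightarrow> x \<in> free_alg E0 E1"
  using lpa_ideal_in_free_alg source_closed range_closed ideal_eq by blast

lemma lclass_eq_iff:
  assumes "p \<in> free_alg E0 E1" "q \<in> free_alg E0 E1"
  shows "cl p = cl q \<longleftrightarrow> p - q \<in> I"
proof
  assume "cl p = cl q"
  then show "p - q \<in> I"
    using assms(1) li_zero by (fastforce simp: lclass_def ideal_eq)
next
  assume pq: "p - q \<in> I"
  have "h - p \<in> I \<longleftrightarrow> h - q \<in> I" for h
    using li_add[of "h - p" E0 E1 s r "p - q"] lpa_ideal_diff[of "h - q" E0 E1 s r "p - q"] pq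
    by (auto simp: ideal_eq)
  then show "cl p = cl q" by (auto simp: lclass_def ideal_eq)
qed

lemma some_in_lclass:
  assumes "p \<in> free_alg E0 E1"
  shows "(SOME x. x \<in> cl p) \<in> free_alg E0 E1" "(SOME x. x \<in> cl p) - p \<in> I"
proof -
  have "p \<in> cl p" using assms li_zero by (simp add: lclass_def)
  then have "(SOME x. x \<in> cl p) \<in> cl p" by (rule someI[where x=p])
  then show "(SOME x. x \<in> cl p) \<in> free_alg E0 E1" "(SOME x. x \<in> cl p) - p \<in> I"
    by (simp_all add: lclass_def ideal_eq)
qed

lemma lpa_carrier: "carrier L = cl ` free_alg E0 E1"
  by (simp add: lpa_def)

lemma lpa_zero: "\<zero>\<^bsub>L\<^esub> = cl 0"
  by (simp add: lpa_def)

lemma lpa_add_lclass: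
  assumes "p \<in> free_alg E0 E1" "q \<in> free_alg E0 E1"
  shows "cl p \<oplus>\<^bsub>L\<^esub> cl q = cl (p + q)"
proof -
  let ?p = "SOME x. x \<in> cl p" and ?q = "SOME x. x \<in> cl q"
  have "(?p + ?q) - (p + q) = (?p - p) + (?q - q)" by (simp add: algebra_simps)
  then have "(?p + ?q) - (p + q) \<in> I"
    using li_add some_in_lclass assms by (metis ideal_eq)
  then have "cl (?p + ?q) = cl (p + q)"
    using some_in_lclass assms by (simp add: lclass_eq_iff)
  then show ?thesis by (simp add: lpa_def)
qed

lemma lpa_mult_lclass:
  assumes "p \<in> free_alg E0 E1" "q \<in> free_alg E0 E1"
  shows "cl p \<otimes>\<^bsub>L\<^esub> cl q = cl (fa_mult p q)"
proof -
  let ?p = "SOME x. x \<in> cl p" and ?q = "SOME x. x \<in> cl q"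
  have "fa_mult ?p ?q - fa_mult p q = fa_mult (?p - p) ?q + fa_mult p (?q - q)"
    by (simp add: fa_mult_diff_left fa_mult_diff_right)
  moreover have "fa_mult (?p - p) ?q \<in> I" "fa_mult p (?q - q) \<in> I"
    using li_rmult li_lmult some_in_lclass assms by (metis ideal_eq)+
  ultimately have "fa_mult ?p ?q - fa_mult p q \<in> I"
    by (metis li_add ideal_eq)
  then have "cl (fa_mult ?p ?q) = cl (fa_mult p q)"
    using some_in_lclass assms by (simp add: lclass_eq_iff)
  then show ?thesis by (simp add: lpa_def)
qed

lemma lclass_in_carrier [simp]: "p \<in> free_alg E0 E1 \<Longrightarrow> cl p \<in> carrier L"
  by (simp add: lpa_carrier)

lemma lpa_carrierE:
  assumes "X \<in> carrier L"
  obtains p where "p \<in> free_alg E0 E1" "X = cl p"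
  using assms by (auto simp: lpa_carrier)

sublocale lpa: nonunital_ring L
proof (intro nonunital_ring.intro abelian_monoidI nonunital_ring_axioms.intro)
  show "\<zero>\<^bsub>L\<^esub> \<in> carrier L" by (simp add: lpa_zero)
qed (auto elim!: lpa_carrierE simp: lpa_zero lpa_add_lclass lpa_mult_lclass ac_simps
       fa_mult_assoc fa_mult_add_left fa_mult_add_right)

end

section \<open>Words modulo the defining relations\<close>

definition word_cong :: "('x list \<Rightarrow> 'r::{ring, monoid_mult}) set \<Rightarrow> 'x list \<Rightarrow> 'x list \<Rightarrow> bool" where
  "word_cong I u v \<longleftrightarrow> monom u - monom v \<in> I"

definition word_null :: "('x list \<Rightarrow> 'r::{ring, monoid_mult}) set \<Rightarrow> 'x list \<Rightarrow> bool" where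
  "word_null I u \<longleftrightarrow> monom u \<in> I"

fun is_path :: "'v set \<Rightarrow> 'e set \<Rightarrow> ('e \<Rightarrow> 'v) \<Rightarrow> ('e \<Rightarrow> 'v) \<Rightarrow> 'v \<Rightarrow> 'e list \<Rightarrow> bool" where
  "is_path E0 E1 s r v [] \<longleftrightarrow> v \<in> E0"
| "is_path E0 E1 s r v (e # a) \<longleftrightarrow> e \<in> E1 \<and> s e = v \<and> is_path E0 E1 s r (r e) a"

fun path_end :: "('e \<Rightarrow> 'v) \<Rightarrow> 'v \<Rightarrow> 'e list \<Rightarrow> 'v" where
  "path_end r v [] = v"
| "path_end r v (e # a) = path_end r (r e) a"

text \<open>The monomial \<open>a b\<^sup>*\<close> of the paths \<open>a\<close> (from \<open>v\<close>) and \<open>b\<close>, with their common end vertex written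
  explicitly so that paths of length zero are covered.\<close>
definition nf_word :: "('e \<Rightarrow> 'v) \<Rightarrow> 'v \<Rightarrow> 'e list \<Rightarrow> 'e list \<Rightarrow> ('v, 'e) lgen list" where
  "nf_word r v a b = map LE a @ LV (path_end r v a) # map LG (rev b)"

lemma path_end_append: "path_end r v (a @ b) = path_end r (path_end r v a) b"
  by (induction a arbitrary: v) auto

lemma nf_word_Nil: "nf_word r v [] b = LV v # map LG (rev b)"
  by (simp add: nf_word_def)

lemma nf_word_Cons: "nf_word r v (e # a) b = LE e # nf_word r (r e) a b"
  by (simp add: nf_word_def)

lemma nf_word_not_Nil [simp]: "nf_word r v a b \<noteq> []"
  by (simp add: nf_word_def)

lemma lgens_simps [simp]:
  "LV v \<in> lgens E0 E1 \<longleftrightarrow> v \<in> E0" "LE e \<in> lgens E0 E1 \<longleftrightarrow> e \<in> E1" "LG e \<in> lgens E0 E1 \<longleftrightarrow> e \<in> E1"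
  by (auto simp: lgens_def)

context leavitt_graph
begin

abbreviation path :: "'v \<Rightarrow> 'e list \<Rightarrow> bool" where
  "path \<equiv> is_path E0 E1 s r"

abbreviation edges :: "'e list \<Rightarrow> ('v, 'e) lgen list" where
  "edges a \<equiv> map LE a"

abbreviation ghosts :: "'e list \<Rightarrow> ('v, 'e) lgen list" where
  "ghosts b \<equiv> map LG (rev b)"

lemma path_start_in: "path v a \<Longrightarrow> v \<in> E0"
  by (cases a) auto

lemma path_append: "path v (a @ b) \<longleftrightarrow> path v a \<and> path (path_end r v a) b"
  by (induction a arbitrary: v) (auto dest: path_start_in)

lemma path_end_in: "path v a \<Longrightarrow> path_end r v a \<in> E0"
  by (induction a arbitrary: v) auto

lemma path_edges: "path v a \<Longrightarrow> set a \<subseteq> E1"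
  by (induction a arbitrary: v) auto

lemma path_gens:
  "path v a \<Longrightarrow> set (edges a) \<subseteq> lgens E0 E1"
  "path v a \<Longrightarrow> set (ghosts a) \<subseteq> lgens E0 E1"
  using path_edges[of v a] by auto

lemma nf_word_gens: "path v a \<Longrightarrow> path u b \<Longrightarrow> set (nf_word r v a b) \<subseteq> lgens E0 E1"
  unfolding nf_word_def using path_edges[of v a] path_edges[of u b] path_end_in[of v a] by auto

lemma word_cong_refl: "word_cong I u u"
  by (simp add: word_cong_def ideal_eq li_zero)

lemma word_cong_sym: "word_cong I u v \<Longrightarrow> word_cong I v u"
  unfolding word_cong_def ideal_eq using lpa_ideal_uminus[of "monom u - monom v"] by simp

lemma word_cong_trans [trans]: "word_cong I u v \<Longrightarrow> word_cong I v w \<Longrightarrow> word_cong I u w"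
  unfolding word_cong_def ideal_eq using li_add[of "monom u - monom v" E0 E1 s r "monom v - monom w"] by simp

lemma word_null_cong: "word_null I u \<Longrightarrow> word_cong I u v \<Longrightarrow> word_null I v"
  unfolding word_cong_def word_null_def ideal_eq
  using lpa_ideal_diff[of "monom u" E0 E1 s r "monom u - monom v"] by simp

lemma word_cong_append_left:
  assumes "set a \<subseteq> lgens E0 E1" "word_cong I u v"
  shows "word_cong I (a @ u) (a @ v)"
proof (cases "a = []")
  case False
  then have "fa_mult (monom a) (monom u - monom v) \<in> I"
    using assms by (auto simp: word_cong_def ideal_eq intro: li_lmult)
  then show ?thesis by (simp add: word_cong_def fa_mult_diff_right fa_mult_monom)
qed (use assms in simp)

lemma word_cong_append_right:
  assumes "set a \<subseteq> lgens E0 E1" "word_cong I u v"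
  shows "word_cong I (u @ a) (v @ a)"
proof (cases "a = []")
  case False
  then have "fa_mult (monom u - monom v) (monom a) \<in> I"
    using assms by (auto simp: word_cong_def ideal_eq intro: li_rmult)
  then show ?thesis by (simp add: word_cong_def fa_mult_diff_left fa_mult_monom)
qed (use assms in simp)

lemma word_cong_in_context:
  assumes "word_cong I u v" "set a \<subseteq> lgens E0 E1" "set b \<subseteq> lgens E0 E1"
    and "x = a @ u @ b" "y = a @ v @ b"
  shows "word_cong I x y"
  using word_cong_append_left[OF assms(2) word_cong_append_right[OF assms(3,1)]] assms(4,5) by simp

lemma word_null_append_left:
  assumes "set a \<subseteq> lgens E0 E1" "word_null I u"
  shows "word_null I (a @ u)"
proof (cases "a = []")
  case False
  then have "fa_mult (monom a) (monom u) \<in> I"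
    using assms by (auto simp: word_null_def ideal_eq intro: li_lmult)
  then show ?thesis by (simp add: word_null_def fa_mult_monom)
qed (use assms in simp)

lemma word_null_append_right:
  assumes "set a \<subseteq> lgens E0 E1" "word_null I u"
  shows "word_null I (u @ a)"
proof (cases "a = []")
  case False
  then have "fa_mult (monom u) (monom a) \<in> I"
    using assms by (auto simp: word_null_def ideal_eq intro: li_rmult)
  then show ?thesis by (simp add: word_null_def fa_mult_monom)
qed (use assms in simp)

lemma word_null_in_context:
  assumes "word_null I u" "set a \<subseteq> lgens E0 E1" "set b \<subseteq> lgens E0 E1" "x = a @ u @ b"
  shows "word_null I x"
  using word_null_append_left[OF assms(2) word_null_append_right[OF assms(3,1)]] assms(4) by simp

lemma rels_in_ideal: "x \<in> lpa_rels E0 E1 s r \<Longrightarrow> x \<in> I"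
  by (simp add: ideal_eq li_rel)

lemma vertex_vertex_rel:
  "u \<in> E0 \<Longrightarrow> v \<in> E0 \<Longrightarrow> monom [LV u, LV v] - (if u = v then monom [LV u] else 0) \<in> I"
  by (rule rels_in_ideal) (unfold lpa_rels_def, blast)

lemma ghost_edge_rel:
  "e \<in> E1 \<Longrightarrow> f \<in> E1 \<Longrightarrow> monom [LG e, LE f] - (if e = f then monom [LV (r e)] else 0) \<in> I"
  by (rule rels_in_ideal) (unfold lpa_rels_def, blast)

lemma cong_vertex_idem: "u \<in> E0 \<Longrightarrow> word_cong I [LV u, LV u] [LV u]"
  using vertex_vertex_rel[of u u] by (simp add: word_cong_def)

lemma null_vertex_vertex: "u \<in> E0 \<Longrightarrow> v \<in> E0 \<Longrightarrow> u \<noteq> v \<Longrightarrow> word_null I [LV u, LV v]"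
  using vertex_vertex_rel[of u v] by (simp add: word_null_def)

lemma cong_source_edge: "e \<in> E1 \<Longrightarrow> word_cong I [LV (s e), LE e] [LE e]"
  unfolding word_cong_def by (rule rels_in_ideal) (unfold lpa_rels_def, blast)

lemma cong_edge_range: "e \<in> E1 \<Longrightarrow> word_cong I [LE e, LV (r e)] [LE e]"
  unfolding word_cong_def by (rule rels_in_ideal) (unfold lpa_rels_def, blast)

lemma cong_range_ghost: "e \<in> E1 \<Longrightarrow> word_cong I [LV (r e), LG e] [LG e]"
  unfolding word_cong_def by (rule rels_in_ideal) (unfold lpa_rels_def, blast)

lemma cong_ghost_source: "e \<in> E1 \<Longrightarrow> word_cong I [LG e, LV (s e)] [LG e]"
  unfolding word_cong_def by (rule rels_in_ideal) (unfold lpa_rels_def, blast)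

lemma cong_ghost_edge: "e \<in> E1 \<Longrightarrow> word_cong I [LG e, LE e] [LV (r e)]"
  using ghost_edge_rel[of e e] by (simp add: word_cong_def)

lemma null_ghost_edge: "e \<in> E1 \<Longrightarrow> f \<in> E1 \<Longrightarrow> e \<noteq> f \<Longrightarrow> word_null I [LG e, LE f]"
  using ghost_edge_rel[of e f] by (simp add: word_null_def)

lemma cong_source_path:
  assumes "path x g"
  shows "word_cong I (LV x # edges g @ [LV (path_end r x g)]) (edges g @ [LV (path_end r x g)])"
proof (cases g)
  case Nil then show ?thesis using assms by (simp add: cong_vertex_idem)
next
  case (Cons e g')
  then have e: "e \<in> E1" "s e = x" "path (r e) g'" using assms by auto
  show ?thesis
    by (rule word_cong_in_context[OF cong_source_edge[OF e(1)],
          of "[]" "edges g' @ [LV (path_end r x g)]"])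
      (use e Cons path_gens[OF e(3)] path_end_in[OF assms] in auto)
qed

lemma cong_ghost_path_source:
  assumes "path x g"
  shows "word_cong I (LV (path_end r x g) # ghosts g @ [LV x]) (LV (path_end r x g) # ghosts g)"
proof (cases g)
  case Nil then show ?thesis using assms by (simp add: cong_vertex_idem path_start_in)
next
  case (Cons e g')
  then have e: "e \<in> E1" "s e = x" "path (r e) g'" using assms by auto
  show ?thesis
    by (rule word_cong_in_context[OF cong_ghost_source[OF e(1)],
          of "LV (path_end r x g) # ghosts g'" "[]"])
      (use e Cons path_gens[OF e(3)] path_end_in[OF assms] in auto)
qed

lemma cong_ghost_path_path:
  assumes "path u b" "b \<noteq> []"
  shows "word_cong I (ghosts b @ edges b) [LV (path_end r u b)]"
  using assms
proof (induction b arbitrary: u)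
  case Nil then show ?case by simp
next
  case (Cons e b')
  then have e: "e \<in> E1" "s e = u" "path (r e) b'" by auto
  have gb: "set (ghosts b') \<subseteq> lgens E0 E1" "set (edges b') \<subseteq> lgens E0 E1"
    using path_gens[OF e(3)] by auto
  have step: "word_cong I (ghosts (e # b') @ edges (e # b')) (ghosts b' @ [LV (r e)] @ edges b')"
    by (rule word_cong_in_context[OF cong_ghost_edge[OF e(1)] gb]) auto
  show ?case
  proof (cases b')
    case (Cons f b'')
    then have f: "f \<in> E1" "s f = r e" "path (r f) b''" using e by auto
    note step
    also have "word_cong I (ghosts b' @ [LV (r e)] @ edges b') (ghosts b' @ edges b')"
      by (rule word_cong_in_context[OF cong_source_edge[OF f(1)] gb(1), of "edges b''"])
        (use f Cons path_gens[OF f(3)] in auto)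
    also have "word_cong I \<dots> [LV (path_end r (r e) b')]"
      using Cons.IH[OF e(3)] Cons by simp
    finally show ?thesis by simp
  qed (use step in simp)
qed

lemma cong_vertex_ghost_path_vertex:
  assumes "path u b" "x = path_end r u b"
  shows "word_cong I (LV x # ghosts b @ edges b @ [LV x]) [LV x]"
proof (cases "b = []")
  case True then show ?thesis using assms by (simp add: cong_vertex_idem path_start_in)
next
  case False
  have x: "x \<in> E0" using path_end_in[OF assms(1)] assms(2) by simp
  have "word_cong I (LV x # ghosts b @ edges b @ [LV x]) [LV x, LV x, LV x]"
    by (rule word_cong_in_context[OF cong_ghost_path_path[OF assms(1) False], of "[LV x]" "[LV x]"])
      (use x assms in auto)
  also have "word_cong I \<dots> [LV x, LV x]"
    by (rule word_cong_in_context[OF cong_vertex_idem[OF x], of "[]" "[LV x]"]) (use x in auto)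
  also have "word_cong I \<dots> [LV x]"
    using cong_vertex_idem[OF x] .
  finally show ?thesis .
qed

text \<open>Cancel \<open>k\<^sup>*\<close> against \<open>k'\<close> edge by edge: incomparability guarantees a mismatch of edges
  (\<open>e\<^sup>* f = 0\<close>) or of vertices (\<open>v v' = 0\<close>) before either path is used up.\<close>
lemma null_ghost_path_vertices_path:
  assumes "path v k" "path v' k'" "\<not> (v = v' \<and> (prefix k k' \<or> prefix k' k))"
  shows "word_null I (ghosts k @ [LV v, LV v'] @ edges k')"
  using assms
proof (induction k arbitrary: v v' k')
  case Nil
  then have "v \<noteq> v'" by auto
  then show ?case
    by (intro word_null_in_context[OF null_vertex_vertex, of v v' "[]" "edges k'"])
      (use Nil path_start_in path_gens in auto)
next
  case (Cons e t)
  then have e: "e \<in> E1" "s e = v" "path (r e) t" by auto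
  have gk: "set (ghosts (e # t)) \<subseteq> lgens E0 E1" "set (edges k') \<subseteq> lgens E0 E1"
    using path_gens[OF Cons.prems(1)] path_gens[OF Cons.prems(2)] by auto
  show ?case
  proof (cases "v = v'")
    case False
    then show ?thesis
      by (intro word_null_in_context[OF null_vertex_vertex gk]) (use Cons.prems path_start_in in auto)
  next
    case True
    then obtain f t' where k': "k' = f # t'" using Cons.prems(3) by (cases k') auto
    then have f: "f \<in> E1" "s f = v" "path (r f) t'" using Cons.prems(2) True by auto
    have gt: "set (ghosts t) \<subseteq> lgens E0 E1" "set (edges t') \<subseteq> lgens E0 E1"
      using path_gens[OF e(3)] path_gens[OF f(3)] by auto
    have v: "v \<in> E0" using e by auto
    have w1: "word_cong I [LG e, LV v, LV v, LE f] [LG e, LV v, LE f]"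
      by (rule word_cong_in_context[OF cong_vertex_idem[OF v], of "[LG e]" "[LE f]"])
        (use e f v in auto)
    have w2: "word_cong I [LG e, LV v, LE f] [LG e, LE f]"
      by (rule word_cong_in_context[OF cong_source_edge[OF f(1)], of "[LG e]" "[]"])
        (use e f v in auto)
    have w12: "word_cong I (ghosts t @ [LG e, LV v, LV v, LE f] @ edges t')
                      (ghosts t @ [LG e, LE f] @ edges t')"
      by (rule word_cong_in_context[OF word_cong_trans[OF w1 w2] gt]) auto
    have eq: "ghosts (e # t) @ [LV v, LV v'] @ edges k' = ghosts t @ [LG e, LV v, LV v, LE f] @ edges t'"
      using True k' by simp
    show ?thesis
    proof (cases "e = f")
      case False
      have "word_null I (ghosts t @ [LG e, LE f] @ edges t')"
        by (rule word_null_in_context[OF null_ghost_edge[OF e(1) f(1) False] gt]) simp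
      then show ?thesis using word_null_cong[OF _ word_cong_sym[OF w12]] eq by simp
    next
      case ef: True
      have re: "r e \<in> E0" using e by simp
      have w3: "word_cong I [LG e, LE f] [LV (r e), LV (r e)]"
        using word_cong_trans[OF cong_ghost_edge[OF e(1)] word_cong_sym[OF cong_vertex_idem[OF re]]] ef by simp
      have w4: "word_cong I (ghosts t @ [LG e, LE f] @ edges t') (ghosts t @ [LV (r e), LV (r e)] @ edges t')"
        by (rule word_cong_in_context[OF w3 gt]) auto
      have "word_null I (ghosts t @ [LV (r e), LV (r e)] @ edges t')"
        by (rule Cons.IH[OF e(3)]) (use f ef Cons.prems(3) True k' in auto)
      then show ?thesis using word_null_cong[OF _ word_cong_sym[OF word_cong_trans[OF w12 w4]]] eq by simp
    qed
  qed
qed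

lemma cong_nf_word_mult:
  assumes "path v a" "path u b" "path w c"
    "path_end r v a = path_end r u b" "path_end r w c = path_end r u b"
  shows "word_cong I (nf_word r v a b @ nf_word r u b c) (nf_word r v a c)"
  by (rule word_cong_in_context[OF cong_vertex_ghost_path_vertex[OF assms(2) refl],
        of "edges a" "ghosts c"])
    (use assms path_gens in \<open>auto simp: nf_word_def\<close>)

lemma cong_nf_word_triple:
  assumes "path v a" "path u b" "path_end r v a = path_end r u b"
  shows "word_cong I (nf_word r v a b @ nf_word r u b a @ nf_word r v a b) (nf_word r v a b)"
proof -
  have "word_cong I ((nf_word r v a b @ nf_word r u b a) @ nf_word r v a b) (nf_word r v a a @ nf_word r v a b)"
    using assms by (intro word_cong_append_right cong_nf_word_mult nf_word_gens) auto
  also have "word_cong I \<dots> (nf_word r v a b)"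
    using assms by (intro cong_nf_word_mult) auto
  finally show ?thesis by simp
qed

lemma cong_nf_idem_mult_extension:
  assumes "path v (k @ g)" "path u n" "path_end r v (k @ g) = path_end r u n"
  shows "word_cong I (nf_word r v k k @ nf_word r v (k @ g) n) (nf_word r v (k @ g) n)"
proof -
  have k: "path v k" and g: "path (path_end r v k) g" using assms(1) path_append by auto
  let ?x = "path_end r v k" and ?y = "path_end r v (k @ g)"
  have y: "?y = path_end r ?x g" by (simp add: path_end_append)
  have gk: "set (edges k) \<subseteq> lgens E0 E1" "set (ghosts k) \<subseteq> lgens E0 E1"
    "set (edges g) \<subseteq> lgens E0 E1" "set (ghosts n) \<subseteq> lgens E0 E1"
    using path_gens[OF k] path_gens[OF g] path_gens[OF assms(2)] by auto
  have x: "?x \<in> E0" using path_end_in[OF k] .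
  have "word_cong I (nf_word r v k k @ nf_word r v (k @ g) n)
      ((edges k @ LV ?x # ghosts k @ edges k) @ (LV ?x # edges g @ [LV ?y]) @ ghosts n)"
    by (rule word_cong_in_context[OF word_cong_sym[OF cong_source_path[OF g]],
          of "edges k @ LV ?x # ghosts k @ edges k" "ghosts n"])
      (use gk x y in \<open>auto simp: nf_word_def\<close>)
  also have "word_cong I \<dots> (edges k @ [LV ?x] @ (edges g @ [LV ?y] @ ghosts n))"
    by (rule word_cong_in_context[OF cong_vertex_ghost_path_vertex[OF k refl],
          of "edges k" "edges g @ [LV ?y] @ ghosts n"])
      (use gk x y path_end_in[OF assms(1)] in auto)
  also have "word_cong I \<dots> (nf_word r v (k @ g) n)"
    by (rule word_cong_in_context[OF cong_source_path[OF g], of "edges k" "ghosts n"])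
      (use gk x y path_end_in[OF assms(1)] in \<open>auto simp: nf_word_def\<close>)
  finally show ?thesis .
qed

lemma cong_nf_mult_idem_extension:
  assumes "path v (k @ g)" "path w c" "path_end r v (k @ g) = path_end r w c"
  shows "word_cong I (nf_word r w c (k @ g) @ nf_word r v k k) (nf_word r w c (k @ g))"
proof -
  have k: "path v k" and g: "path (path_end r v k) g" using assms(1) path_append by auto
  let ?x = "path_end r v k" and ?y = "path_end r v (k @ g)"
  have y: "?y = path_end r ?x g" by (simp add: path_end_append)
  have gk: "set (edges k) \<subseteq> lgens E0 E1" "set (ghosts k) \<subseteq> lgens E0 E1"
    "set (ghosts g) \<subseteq> lgens E0 E1" "set (edges c) \<subseteq> lgens E0 E1"
    using path_gens[OF k] path_gens[OF g] path_gens[OF assms(2)] by auto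
  have x: "?x \<in> E0" using path_end_in[OF k] .
  have yw: "path_end r w c = ?y" using assms(3) by simp
  have "word_cong I (nf_word r w c (k @ g) @ nf_word r v k k)
      (edges c @ (LV ?y # ghosts g @ [LV ?x]) @ (ghosts k @ edges k @ LV ?x # ghosts k))"
    by (rule word_cong_in_context[OF word_cong_sym[OF cong_ghost_path_source[OF g]],
          of "edges c" "ghosts k @ edges k @ LV ?x # ghosts k"])
      (use gk x y yw in \<open>auto simp: nf_word_def\<close>)
  also have "word_cong I \<dots> ((edges c @ LV ?y # ghosts g) @ [LV ?x] @ ghosts k)"
    by (rule word_cong_in_context[OF cong_vertex_ghost_path_vertex[OF k refl],
          of "edges c @ LV ?y # ghosts g" "ghosts k"])
      (use gk x y path_end_in[OF assms(1)] in auto)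
  also have "word_cong I \<dots> (nf_word r w c (k @ g))"
    by (rule word_cong_in_context[OF cong_ghost_path_source[OF g], of "edges c" "ghosts k"])
      (use gk x y yw path_end_in[OF assms(1)] in \<open>auto simp: nf_word_def\<close>)
  finally show ?thesis .
qed

lemma null_nf_idem_mult_incomparable:
  assumes "path v k" "path v' k'" "\<not> (v = v' \<and> (prefix k k' \<or> prefix k' k))"
  shows "word_null I (nf_word r v k k @ nf_word r v' k' k')"
proof -
  let ?x = "path_end r v k" and ?x' = "path_end r v' k'"
  have gk: "set (edges k) \<subseteq> lgens E0 E1" "set (ghosts k) \<subseteq> lgens E0 E1"
    "set (edges k') \<subseteq> lgens E0 E1" "set (ghosts k') \<subseteq> lgens E0 E1"
    using path_gens[OF assms(1)] path_gens[OF assms(2)] by auto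
  have x: "?x \<in> E0" "?x' \<in> E0" "v \<in> E0" "v' \<in> E0"
    using path_end_in[OF assms(1)] path_end_in[OF assms(2)] path_start_in[OF assms(1)] path_start_in[OF assms(2)] by auto
  have z: "word_null I ((edges k @ [LV ?x]) @ (ghosts k @ [LV v, LV v'] @ edges k') @ (LV ?x' # ghosts k'))"
    by (rule word_null_in_context[OF null_ghost_path_vertices_path[OF assms],
          of "edges k @ [LV ?x]" "LV ?x' # ghosts k'"])
      (use gk x in auto)
  have w1: "word_cong I ((edges k @ [LV ?x]) @ (ghosts k @ [LV v, LV v'] @ edges k') @ (LV ?x' # ghosts k'))
     (edges k @ (LV ?x # ghosts k) @ (LV v' # edges k' @ LV ?x' # ghosts k'))"
    by (rule word_cong_in_context[OF cong_ghost_path_source[OF assms(1)],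
          of "edges k" "LV v' # edges k' @ LV ?x' # ghosts k'"])
      (use gk x in auto)
  have w2: "word_cong I (edges k @ (LV ?x # ghosts k) @ (LV v' # edges k' @ LV ?x' # ghosts k'))
     (nf_word r v k k @ nf_word r v' k' k')"
    by (rule word_cong_in_context[OF cong_source_path[OF assms(2)],
          of "edges k @ LV ?x # ghosts k" "ghosts k'"])
      (use gk x in \<open>auto simp: nf_word_def\<close>)
  show ?thesis using word_null_cong[OF z word_cong_trans[OF w1 w2]] .
qed

end

lemma word_deg_Nil [simp]: "word_deg G d [] = \<one>\<^bsub>G\<^esub>"
  by (simp add: word_deg_def)

lemma word_deg_Cons [simp]: "word_deg G d (a # w) = gen_deg G d a \<otimes>\<^bsub>G\<^esub> word_deg G d w"
  by (simp add: word_deg_def)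

locale graded_leavitt_graph = leavitt_graph E0 E1 s r I
  for E0 :: "'v set" and E1 :: "'e set" and s r :: "'e \<Rightarrow> 'v"
    and I :: "(('v, 'e) lgen list \<Rightarrow> 'r::{ring, monoid_mult}) set" +
  fixes G :: "('g, 'm) monoid_scheme" and d :: "'e \<Rightarrow> 'g"
  assumes group: "group G" and edge_deg_closed: "d ` E1 \<subseteq> carrier G"
begin

sublocale G: group G
  by (fact group)

lemma edge_deg_in [simp]: "e \<in> E1 \<Longrightarrow> d e \<in> carrier G"
  using edge_deg_closed by auto

lemma gen_deg_closed: "a \<in> lgens E0 E1 \<Longrightarrow> gen_deg G d a \<in> carrier G"
  by (auto simp: lgens_def)

lemma word_deg_closed: "set w \<subseteq> lgens E0 E1 \<Longrightarrow> word_deg G d w \<in> carrier G"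
  by (induction w) (auto simp: gen_deg_closed)

lemma word_deg_append:
  "set u \<subseteq> lgens E0 E1 \<Longrightarrow> set w \<subseteq> lgens E0 E1 \<Longrightarrow>
    word_deg G d (u @ w) = word_deg G d u \<otimes>\<^bsub>G\<^esub> word_deg G d w"
  by (induction u) (auto simp: word_deg_closed gen_deg_closed G.m_assoc)

lemma word_deg_ghosts: "set b \<subseteq> E1 \<Longrightarrow> word_deg G d (ghosts b) = inv\<^bsub>G\<^esub> word_deg G d (edges b)"
proof (induction b)
  case (Cons e b)
  have gens: "set (ghosts b) \<subseteq> lgens E0 E1" "set (edges b) \<subseteq> lgens E0 E1"
    using Cons.prems by auto
  have "word_deg G d (ghosts (e # b)) = word_deg G d (ghosts b) \<otimes>\<^bsub>G\<^esub> inv\<^bsub>G\<^esub> d e"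
    using word_deg_append[of "ghosts b" "[LG e]"] Cons.prems gens by auto
  also have "\<dots> = inv\<^bsub>G\<^esub> (d e \<otimes>\<^bsub>G\<^esub> word_deg G d (edges b))"
    using Cons gens by (simp add: G.inv_mult_group word_deg_closed)
  finally show ?case by simp
qed simp

lemma word_deg_nf_word:
  assumes "path v a" "path u b"
  shows "word_deg G d (nf_word r v a b) = word_deg G d (edges a) \<otimes>\<^bsub>G\<^esub> inv\<^bsub>G\<^esub> word_deg G d (edges b)"
proof -
  have "word_deg G d (nf_word r v a b) = word_deg G d (edges a) \<otimes>\<^bsub>G\<^esub> word_deg G d (ghosts b)"
    unfolding nf_word_def using assms path_gens path_end_in
    by (subst word_deg_append) (auto simp: word_deg_closed)
  then show ?thesis using word_deg_ghosts path_edges[OF assms(2)] by metis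
qed

lemma word_deg_nf_word_swap:
  assumes "path v a" "path u b"
  shows "word_deg G d (nf_word r u b a) = inv\<^bsub>G\<^esub> word_deg G d (nf_word r v a b)"
  using assms path_gens[OF assms(1)] path_gens[OF assms(2)]
  by (simp add: word_deg_nf_word G.inv_mult_group word_deg_closed)

definition normal_form :: "('v, 'e) lgen list \<Rightarrow> 'v \<Rightarrow> 'e list \<Rightarrow> 'v \<Rightarrow> 'e list \<Rightarrow> bool" where
  "normal_form w v a u b \<longleftrightarrow> path v a \<and> path u b \<and> path_end r v a = path_end r u b
     \<and> word_cong I w (nf_word r v a b) \<and> word_deg G d w = word_deg G d (nf_word r v a b)"

definition null_or_normal :: "('v, 'e) lgen list \<Rightarrow> bool" where
  "null_or_normal w \<longleftrightarrow> word_null I w \<or> (\<exists>v a u b. normal_form w v a u b)"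

lemma null_or_normal_cong:
  assumes "word_cong I w w'" "word_deg G d w = word_deg G d w'" "null_or_normal w'"
  shows "null_or_normal w"
  using assms word_null_cong[OF _ word_cong_sym[OF assms(1)]] word_cong_trans[OF assms(1)]
  unfolding null_or_normal_def normal_form_def by metis

lemma normal_form_self:
  "path v a \<Longrightarrow> path u b \<Longrightarrow> path_end r v a = path_end r u b \<Longrightarrow> null_or_normal (nf_word r v a b)"
  unfolding null_or_normal_def normal_form_def using word_cong_refl by blast

lemma cong_vertex_nf_word:
  assumes "path v a" "path u b"
  shows "word_cong I (LV v # nf_word r v a b) (nf_word r v a b)"
  by (rule word_cong_in_context[OF cong_source_path[OF assms(1)], of "[]" "ghosts b"])
    (use path_gens[OF assms(2)] in \<open>auto simp: nf_word_def\<close>)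

lemma null_or_normal_Cons_vertex:
  assumes "y \<in> E0" and p: "path v a" "path u b" "path_end r v a = path_end r u b"
  shows "null_or_normal (LV y # nf_word r v a b)"
proof (cases "y = v")
  case True
  then show ?thesis
    by (intro null_or_normal_cong[OF _ _ normal_form_self[OF p]])
      (use cong_vertex_nf_word[OF p(1,2)] nf_word_gens[OF p(1,2)] in \<open>auto simp: word_deg_closed\<close>)
next
  case False
  have "word_null I ([LV y, LV v] @ nf_word r v a b)"
    using assms(1) path_start_in[OF p(1)] nf_word_gens[OF p(1,2)] False
    by (intro word_null_in_context[OF null_vertex_vertex, of y v "[]"]) auto
  moreover have "word_cong I ([LV y, LV v] @ nf_word r v a b) (LV y # nf_word r v a b)"
    by (rule word_cong_in_context[OF cong_vertex_nf_word[OF p(1,2)], of "[LV y]" "[]"])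
      (use assms(1) in auto)
  ultimately show ?thesis
    unfolding null_or_normal_def by (blast intro: word_null_cong)
qed

lemma null_or_normal_Cons_edge:
  assumes e: "e \<in> E1" and p: "path v a" "path u b" "path_end r v a = path_end r u b"
  shows "null_or_normal (LE e # nf_word r v a b)"
proof (cases "r e = v")
  case True
  then have "path (s e) (e # a)" "path_end r (s e) (e # a) = path_end r u b"
    using e p by auto
  moreover have "LE e # nf_word r v a b = nf_word r (s e) (e # a) b"
    using True by (simp add: nf_word_Cons)
  ultimately show ?thesis
    using normal_form_self[OF _ p(2)] by simp
next
  case False
  have "word_null I ([LE e] @ [LV (r e), LV v] @ nf_word r v a b)"
    using e path_start_in[OF p(1)] nf_word_gens[OF p(1,2)] False
    by (intro word_null_in_context[OF null_vertex_vertex,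
          of "r e" v "[LE e]" "nf_word r v a b"]) auto
  moreover have "word_cong I ([LE e, LV (r e)] @ LV v # nf_word r v a b) ([LE e] @ LV v # nf_word r v a b)"
    using e p nf_word_gens[OF p(1,2)] path_start_in[OF p(1)]
    by (intro word_cong_append_right cong_edge_range) auto
  moreover have "word_cong I ([LE e] @ LV v # nf_word r v a b) (LE e # nf_word r v a b)"
    by (rule word_cong_in_context[OF cong_vertex_nf_word[OF p(1,2)], of "[LE e]" "[]"])
      (use e in auto)
  ultimately show ?thesis
    unfolding null_or_normal_def by (auto intro: word_null_cong word_cong_trans)
qed

lemma null_or_normal_Cons_ghost:
  assumes e: "e \<in> E1" and p: "path v a" "path u b" "path_end r v a = path_end r u b"
  shows "null_or_normal (LG e # nf_word r v a b)"
proof (cases a)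
  case Nil
  have gb: "set (ghosts b) \<subseteq> lgens E0 E1" using path_gens[OF p(2)] by auto
  have v: "v \<in> E0" using path_start_in[OF p(1)] .
  show ?thesis
  proof (cases "s e = v")
    case True
    have "word_cong I (LG e # nf_word r v a b) (LG e # ghosts b)"
      by (rule word_cong_in_context[OF cong_ghost_source[OF e], of "[]" "ghosts b"])
        (use gb e True Nil in \<open>auto simp: nf_word_Nil\<close>)
    also have "word_cong I \<dots> (nf_word r (r e) [] (b @ [e]))"
      by (rule word_cong_in_context[OF word_cong_sym[OF cong_range_ghost[OF e]],
            of "[]" "ghosts b"])
        (use gb e in \<open>auto simp: nf_word_Nil\<close>)
    finally have cong: "word_cong I (LG e # nf_word r v a b) (nf_word r (r e) [] (b @ [e]))" .
    have deg: "word_deg G d (LG e # nf_word r v a b) = word_deg G d (nf_word r (r e) [] (b @ [e]))"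
      using word_deg_closed[OF gb] e Nil by (simp add: nf_word_Nil)
    have "path (r e) []" "path u (b @ [e])" "path_end r (r e) [] = path_end r u (b @ [e])"
      using path_append p e True Nil by (auto simp: path_end_append)
    then show ?thesis
      using null_or_normal_cong[OF cong deg normal_form_self] by blast
  next
    case False
    have "word_null I ([LG e] @ [LV (s e), LV v] @ ghosts b)"
      using gb e v False
      by (intro word_null_in_context[OF null_vertex_vertex, of "s e" v "[LG e]" "ghosts b"]) auto
    moreover have "word_cong I ([LG e, LV (s e)] @ LV v # ghosts b) ([LG e] @ LV v # ghosts b)"
      using gb e v by (intro word_cong_append_right cong_ghost_source) auto
    ultimately show ?thesis
      unfolding null_or_normal_def using Nil by (auto simp: nf_word_Nil intro: word_null_cong)
  qed
next
  case (Cons f a')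
  then have f: "f \<in> E1" "s f = v" "path (r f) a'" using p by auto
  have g: "set (nf_word r (r f) a' b) \<subseteq> lgens E0 E1" using nf_word_gens[OF f(3) p(2)] .
  show ?thesis
  proof (cases "e = f")
    case True
    have "word_cong I (LG e # nf_word r v a b) (LV (r f) # nf_word r (r f) a' b)"
      by (rule word_cong_in_context[OF cong_ghost_edge[OF e], of "[]" "nf_word r (r f) a' b"])
        (use g e True Cons in \<open>auto simp: nf_word_Cons\<close>)
    also have "word_cong I \<dots> (nf_word r (r f) a' b)"
      using cong_vertex_nf_word[OF f(3) p(2)] .
    finally have cong: "word_cong I (LG e # nf_word r v a b) (nf_word r (r f) a' b)" .
    have deg: "word_deg G d (LG e # nf_word r v a b) = word_deg G d (nf_word r (r f) a' b)"
      using Cons True e word_deg_closed[OF g] by (simp add: nf_word_Cons G.m_assoc[symmetric])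
    have "path_end r (r f) a' = path_end r u b" using p Cons by simp
    then show ?thesis
      using null_or_normal_cong[OF cong deg normal_form_self[OF f(3) p(2)]] by simp
  next
    case False
    have "word_null I (LG e # nf_word r v a b)"
      by (rule word_null_in_context[OF null_ghost_edge[OF e f(1) False],
            of "[]" "nf_word r (r f) a' b"])
        (use g Cons in \<open>auto simp: nf_word_Cons\<close>)
    then show ?thesis by (simp add: null_or_normal_def)
  qed
qed

lemma null_or_normal_Cons:
  assumes "x \<in> lgens E0 E1" "path v a" "path u b" "path_end r v a = path_end r u b"
  shows "null_or_normal (x # nf_word r v a b)"
  using assms null_or_normal_Cons_vertex null_or_normal_Cons_edge null_or_normal_Cons_ghost
  by (cases x) auto

lemma null_or_normal_word:
  assumes "w \<noteq> []" "set w \<subseteq> lgens E0 E1"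
  shows "null_or_normal w"
  using assms
proof (induction w)
  case (Cons x w)
  have x: "x \<in> lgens E0 E1" and gw: "set w \<subseteq> lgens E0 E1" using Cons.prems by auto
  show ?case
  proof (cases "w = []")
    case True
    obtain z where z: "z \<in> E0" "word_cong I [x] (x # nf_word r z [] [])"
    proof (cases x)
      case (LV y)
      then show thesis using that[of y] x word_cong_sym[OF cong_vertex_idem] by (simp add: nf_word_Nil)
    next
      case (LE e)
      then show thesis using that[of "r e"] x word_cong_sym[OF cong_edge_range] by (simp add: nf_word_Nil)
    next
      case (LG e)
      then show thesis using that[of "s e"] x word_cong_sym[OF cong_ghost_source] by (simp add: nf_word_Nil)
    qed
    moreover have "word_deg G d [x] = word_deg G d (x # nf_word r z [] [])"
      using z(1) by (simp add: nf_word_Nil)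
    ultimately show ?thesis
      using True x null_or_normal_Cons[OF x, of z "[]" z "[]"] null_or_normal_cong by auto
  next
    case False
    from Cons.IH[OF False gw] show ?thesis
      unfolding null_or_normal_def[of w]
    proof
      assume "word_null I w"
      then show ?thesis
        using word_null_append_left[of "[x]"] x by (simp add: null_or_normal_def)
    next
      assume "\<exists>v a u b. normal_form w v a u b"
      then obtain v a u b where p: "path v a" "path u b" "path_end r v a = path_end r u b"
        and "word_cong I w (nf_word r v a b)" "word_deg G d w = word_deg G d (nf_word r v a b)"
        unfolding normal_form_def by blast
      then show ?thesis
        using x null_or_normal_Cons[OF x p] word_cong_append_left[of "[x]"] null_or_normal_cong
        by (metis append_Cons append_Nil empty_subsetI insert_subset list.set word_deg_Cons)
    qed
  qed
qed simp

end

definition free_alg_deg ::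
  "('g, 'b) monoid_scheme \<Rightarrow> 'v set \<Rightarrow> 'e set \<Rightarrow> ('e \<Rightarrow> 'g) \<Rightarrow> 'g \<Rightarrow> (('v, 'e) lgen list \<Rightarrow> 'r::{ring, monoid_mult}) set"
  where "free_alg_deg G E0 E1 d g = {f \<in> free_alg E0 E1. \<forall>w. f w \<noteq> 0 \<longrightarrow> word_deg G d w = g}"

lemma lpa_comp_eq: "lpa_comp G E0 E1 s r d g = lclass E0 E1 s r ` free_alg_deg G E0 E1 d g"
  by (simp add: lpa_comp_def free_alg_deg_def)

context graded_leavitt_graph
begin

abbreviation H :: "'g \<Rightarrow> (('v, 'e) lgen list \<Rightarrow> 'r) set" where
  "H \<equiv> free_alg_deg G E0 E1 d"

abbreviation S :: "'g \<Rightarrow> (('v, 'e) lgen list \<Rightarrow> 'r) set set" where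
  "S \<equiv> lpa_comp G E0 E1 s r d"

lemma free_alg_deg_free_alg: "p \<in> H g \<Longrightarrow> p \<in> free_alg E0 E1"
  by (simp add: free_alg_deg_def)

lemma free_alg_deg_zero [simp]: "0 \<in> H g"
  by (simp add: free_alg_deg_def)

lemma free_alg_deg_add:
  assumes "p \<in> H g" "q \<in> H g"
  shows "p + q \<in> H g"
proof -
  have "p w \<noteq> 0 \<or> q w \<noteq> 0" if "(p + q) w \<noteq> 0" for w
    using that by auto
  then show ?thesis using assms by (auto simp: free_alg_deg_def)
qed

lemma free_alg_deg_smonom:
  "w \<noteq> [] \<Longrightarrow> set w \<subseteq> lgens E0 E1 \<Longrightarrow> word_deg G d w = g \<Longrightarrow> smonom c w \<in> H g"
  unfolding free_alg_deg_def using free_alg_smonom[of w E0 E1 c] by (auto simp: smonom_def)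

lemma free_alg_deg_mult:
  assumes p: "p \<in> H g" and q: "q \<in> H h"
  shows "fa_mult p q \<in> H (g \<otimes>\<^bsub>G\<^esub> h)"
proof -
  have "word_deg G d w = g \<otimes>\<^bsub>G\<^esub> h" if nz: "fa_mult p q w \<noteq> 0" for w
  proof -
    obtain i where i: "p (take i w) \<noteq> 0" "q (drop i w) \<noteq> 0"
      using fa_mult_nonzero_split[OF nz] by blast
    then have "set (take i w) \<subseteq> lgens E0 E1" "set (drop i w) \<subseteq> lgens E0 E1"
      using p q by (auto simp: free_alg_deg_def free_alg_def)
    then have "word_deg G d w = word_deg G d (take i w) \<otimes>\<^bsub>G\<^esub> word_deg G d (drop i w)"
      using word_deg_append by (metis append_take_drop_id)
    then show ?thesis using i p q by (auto simp: free_alg_deg_def)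
  qed
  then show ?thesis using p q by (auto simp: free_alg_deg_def)
qed

lemma free_alg_deg_induct [consumes 1, case_names zero add_smonom]:
  assumes "p \<in> H g" "P 0"
    and "\<And>q c w. q \<in> H g \<Longrightarrow> P q \<Longrightarrow> w \<noteq> [] \<Longrightarrow> set w \<subseteq> lgens E0 E1 \<Longrightarrow> word_deg G d w = g
      \<Longrightarrow> P (q + smonom c w)"
  shows "P p"
proof -
  have "p \<in> free_alg E0 E1" using assms(1) by (simp add: free_alg_deg_def)
  then have "p \<in> H g \<longrightarrow> P p"
  proof (induction p rule: free_alg_induct)
    case (add_smonom q c w)
    show ?case
    proof
      assume qcw: "q + smonom c w \<in> H g"
      have "q x = (q + smonom c w) x" if "q x \<noteq> 0" for x
        using that add_smonom.hyps(4) by (auto simp: smonom_def)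
      then have q: "q \<in> H g"
        using qcw add_smonom.hyps(1) by (auto simp: free_alg_deg_def)
      show "P (q + smonom c w)"
      proof (cases "c = 0")
        case False
        then have "word_deg G d w = g"
          using qcw add_smonom.hyps(4) by (auto simp: free_alg_deg_def smonom_def)
        then show ?thesis using assms(3) add_smonom q by blast
      qed (use add_smonom q in simp)
    qed
  qed (simp add: assms(2) del: zero_fun_apply)
  then show ?thesis using assms(1) by blast
qed

lemma lpa_comp_zero: "\<zero>\<^bsub>L\<^esub> \<in> S g"
  unfolding lpa_comp_eq lpa_zero by (intro imageI free_alg_deg_zero)

lemma lpa_comp_add:
  assumes "x \<in> S g" "y \<in> S g"
  shows "x \<oplus>\<^bsub>L\<^esub> y \<in> S g"
proof -
  obtain p q where "p \<in> H g" "q \<in> H g" "x = cl p" "y = cl q"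
    using assms unfolding lpa_comp_eq by blast
  then show ?thesis
    unfolding lpa_comp_eq using free_alg_deg_add
    by (simp add: lpa_add_lclass free_alg_deg_free_alg del: plus_fun_apply)
qed

lemma lpa_comp_mult:
  assumes "x \<in> S g" "y \<in> S h"
  shows "x \<otimes>\<^bsub>L\<^esub> y \<in> S (g \<otimes>\<^bsub>G\<^esub> h)"
proof -
  obtain p q where "p \<in> H g" "q \<in> H h" "x = cl p" "y = cl q"
    using assms unfolding lpa_comp_eq by blast
  then show ?thesis
    unfolding lpa_comp_eq using free_alg_deg_mult by (simp add: lpa_mult_lclass free_alg_deg_free_alg)
qed

lemma lpa_comp_subset_carrier: "S g \<subseteq> carrier L"
  unfolding lpa_comp_eq by (auto simp: free_alg_deg_free_alg)

lemma set_prod_lpa_comp: "set_prod L (S g) (S h) \<subseteq> S (g \<otimes>\<^bsub>G\<^esub> h)"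
  by (rule set_prod_subset) (auto intro: lpa_comp_zero lpa_comp_add lpa_comp_mult)

lemma lclass_smonom_in_lpa_comp:
  "w \<noteq> [] \<Longrightarrow> set w \<subseteq> lgens E0 E1 \<Longrightarrow> word_deg G d w = g \<Longrightarrow> cl (smonom c w) \<in> S g"
  unfolding lpa_comp_eq by (auto intro!: imageI free_alg_deg_smonom)

lemma lpa_comp_subsetI:
  assumes "\<zero>\<^bsub>L\<^esub> \<in> Z" "\<And>x y. x \<in> Z \<Longrightarrow> y \<in> Z \<Longrightarrow> x \<in> carrier L \<Longrightarrow> y \<in> carrier L \<Longrightarrow> x \<oplus>\<^bsub>L\<^esub> y \<in> Z"
    and "\<And>c w. w \<noteq> [] \<Longrightarrow> set w \<subseteq> lgens E0 E1 \<Longrightarrow> word_deg G d w = g \<Longrightarrow> cl (smonom c w) \<in> Z"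
  shows "S g \<subseteq> Z"
proof
  fix x assume "x \<in> S g"
  then obtain p where p: "p \<in> H g" "x = cl p" unfolding lpa_comp_eq by blast
  have "cl p \<in> Z" using p(1)
  proof (induction p rule: free_alg_deg_induct)
    case zero
    then show ?case using assms(1) by (simp add: lpa_zero del: zero_fun_apply)
  next
    case (add_smonom q c w)
    have "cl (q + smonom c w) = cl q \<oplus>\<^bsub>L\<^esub> cl (smonom c w)"
      using add_smonom.hyps free_alg_deg_free_alg by (simp add: lpa_add_lclass)
    then show ?case \<comment> \<open>\<open>plus_fun_apply\<close> would eta-expand the argument of \<open>cl\<close>\<close>
      using add_smonom free_alg_deg_free_alg assms(2,3) by (simp del: plus_fun_apply)
  qed
  then show "x \<in> Z" using p by simp
qed

lemma lclass_smonom_null: "word_null I w \<Longrightarrow> cl (smonom c w) = \<zero>\<^bsub>L\<^esub>"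
proof -
  assume "word_null I w"
  then have "smonom c w \<in> I"
    unfolding word_null_def smonom_eq_scale_monom ideal_eq by (rule li_lsmult)
  then show ?thesis
    using ideal_in_free_alg by (simp add: lpa_zero lclass_eq_iff)
qed

lemma lclass_smonom_cong:
  assumes "word_cong I u v" "u \<noteq> []" "set u \<subseteq> lgens E0 E1" "v \<noteq> []" "set v \<subseteq> lgens E0 E1"
  shows "cl (smonom c u) = cl (smonom c v)"
proof -
  have "(\<lambda>x. c * (monom u - monom v) x) \<in> I"
    using assms(1) unfolding word_cong_def ideal_eq by (rule li_lsmult)
  moreover have "(\<lambda>x. c * (monom u - monom v) x) = smonom c u - smonom c v"
    by (auto simp: smonom_def monom_def)
  ultimately show ?thesis using assms(2-5) by (simp add: lclass_eq_iff)
qed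

lemma lclass_smonom_mult:
  "u \<noteq> [] \<Longrightarrow> set u \<subseteq> lgens E0 E1 \<Longrightarrow> v \<noteq> [] \<Longrightarrow> set v \<subseteq> lgens E0 E1 \<Longrightarrow>
    cl (smonom a u) \<otimes>\<^bsub>L\<^esub> cl (smonom b v) = cl (smonom (a * b) (u @ v))"
  by (simp add: lpa_mult_lclass fa_mult_smonom)

lemma lclass_smonom_normal_form:
  assumes "w \<noteq> []" "set w \<subseteq> lgens E0 E1" "word_deg G d w = g"
  shows "cl (smonom c w) = \<zero>\<^bsub>L\<^esub> \<or> (\<exists>v a u b. path v a \<and> path u b \<and> path_end r v a = path_end r u b
    \<and> word_deg G d (nf_word r v a b) = g \<and> cl (smonom c w) = cl (smonom c (nf_word r v a b)))"
  using null_or_normal_word[OF assms(1,2)] unfolding null_or_normal_def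
proof
  assume "word_null I w"
  then show ?thesis by (simp add: lclass_smonom_null)
next
  assume "\<exists>v a u b. normal_form w v a u b"
  then obtain v a u b where "normal_form w v a u b" by blast
  then have "path v a" "path u b" "path_end r v a = path_end r u b"
    and "word_deg G d (nf_word r v a b) = g" "word_cong I w (nf_word r v a b)"
    using assms(3) by (auto simp: normal_form_def)
  moreover from this have "cl (smonom c w) = cl (smonom c (nf_word r v a b))"
    using assms(1,2) nf_word_gens by (intro lclass_smonom_cong) auto
  ultimately show ?thesis by blast
qed

end

section \<open>Enough idempotents\<close>

context graded_leavitt_graph
begin

definition nf_heads :: "'g \<Rightarrow> ('v \<times> 'e list) set" where
  "nf_heads g = {(v, a). path v a \<and>
     (\<exists>u b. path u b \<and> path_end r v a = path_end r u b \<and> word_deg G d (nf_word r v a b) = g)}"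

definition minimal_nf_heads :: "'g \<Rightarrow> ('v \<times> 'e list) set" where
  "minimal_nf_heads g = {(v, a) \<in> nf_heads g. \<forall>a'. (v, a') \<in> nf_heads g \<and> prefix a' a \<longrightarrow> a' = a}"

definition nf_idempotents :: "'g \<Rightarrow> (('v, 'e) lgen list \<Rightarrow> 'r) set set" where
  "nf_idempotents g = (\<lambda>(v, a). cl (smonom 1 (nf_word r v a a))) ` minimal_nf_heads g"

lemma minimal_nf_head_prefix:
  "(v, a) \<in> nf_heads g \<Longrightarrow> \<exists>k. (v, k) \<in> minimal_nf_heads g \<and> prefix k a"
proof (induction a rule: length_induct)
  case (1 a)
  show ?case
  proof (cases "(v, a) \<in> minimal_nf_heads g")
    case False
    then obtain a' where a': "(v, a') \<in> nf_heads g" "strict_prefix a' a"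
      using "1.prems" unfolding minimal_nf_heads_def strict_prefix_def by blast
    then obtain k where "(v, k) \<in> minimal_nf_heads g" "prefix k a'"
      using "1.IH" prefix_length_less by blast
    then show ?thesis
      using a'(2) prefix_order.trans strict_prefix_def by blast
  qed auto
qed

lemma minimal_nf_headsD:
  assumes "(v, k) \<in> minimal_nf_heads g"
  shows "path v k" "(v, k) \<in> nf_heads g"
  using assms by (auto simp: minimal_nf_heads_def nf_heads_def)

lemma lclass_smonom_nf_word_in_carrier:
  "path v a \<Longrightarrow> path u b \<Longrightarrow> cl (smonom c (nf_word r v a b)) \<in> carrier L"
  using nf_word_gens by simp

lemma lclass_smonom_nf_word_mult:
  "path v a \<Longrightarrow> path u b \<Longrightarrow> path v' a' \<Longrightarrow> path u' b' \<Longrightarrow>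
    cl (smonom c (nf_word r v a b)) \<otimes>\<^bsub>L\<^esub> cl (smonom c' (nf_word r v' a' b'))
      = cl (smonom (c * c') (nf_word r v a b @ nf_word r v' a' b'))"
  using nf_word_gens by (simp add: lclass_smonom_mult)

lemma nf_idempotents_orthogonal: "lpa.orthogonal_idempotents (nf_idempotents g)"
  unfolding lpa.orthogonal_idempotents_def
proof (intro conjI ballI impI subsetI)
  fix e assume "e \<in> nf_idempotents g"
  then obtain v k where "(v, k) \<in> minimal_nf_heads g" and e: "e = cl (smonom 1 (nf_word r v k k))"
    unfolding nf_idempotents_def by auto
  moreover from this have k: "path v k" by (simp add: minimal_nf_headsD)
  ultimately show "e \<in> carrier L" by (simp add: lclass_smonom_nf_word_in_carrier)
  have "e \<otimes>\<^bsub>L\<^esub> e = cl (smonom 1 (nf_word r v k k @ nf_word r v k k))"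
    using k e by (simp add: lclass_smonom_nf_word_mult)
  also have "\<dots> = e"
    unfolding e by (rule lclass_smonom_cong) (use k cong_nf_word_mult nf_word_gens in auto)
  finally show "e \<otimes>\<^bsub>L\<^esub> e = e" .
next
  fix e f assume ef: "e \<in> nf_idempotents g" "f \<in> nf_idempotents g" "e \<noteq> f"
  obtain v k v' k' where vk: "(v, k) \<in> minimal_nf_heads g" "e = cl (smonom 1 (nf_word r v k k))"
    and vk': "(v', k') \<in> minimal_nf_heads g" "f = cl (smonom 1 (nf_word r v' k' k'))"
    using ef(1,2) unfolding nf_idempotents_def by auto
  have "\<not> (v = v' \<and> (prefix k k' \<or> prefix k' k))"
    using vk vk' ef(3) unfolding minimal_nf_heads_def by auto
  then have "word_null I (nf_word r v k k @ nf_word r v' k' k')"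
    using vk(1) vk'(1) by (intro null_nf_idem_mult_incomparable) (auto dest: minimal_nf_headsD)
  moreover have "e \<otimes>\<^bsub>L\<^esub> f = cl (smonom 1 (nf_word r v k k @ nf_word r v' k' k'))"
    using vk vk' minimal_nf_headsD(1)[OF vk(1)] minimal_nf_headsD(1)[OF vk'(1)]
    by (simp add: lclass_smonom_nf_word_mult)
  ultimately show "e \<otimes>\<^bsub>L\<^esub> f = \<zero>\<^bsub>L\<^esub>"
    by (simp add: lclass_smonom_null)
qed

lemma nf_idempotents_subset: "nf_idempotents g \<subseteq> set_prod L (S g) (S (inv\<^bsub>G\<^esub> g))"
proof
  fix e assume "e \<in> nf_idempotents g"
  then obtain v k where "(v, k) \<in> minimal_nf_heads g" and e: "e = cl (smonom 1 (nf_word r v k k))"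
    unfolding nf_idempotents_def by auto
  then obtain u b where p: "path v k" "path u b" "path_end r v k = path_end r u b"
    and deg: "word_deg G d (nf_word r v k b) = g"
    unfolding minimal_nf_heads_def nf_heads_def by auto
  have "cl (smonom 1 (nf_word r v k b)) \<in> S g"
    using deg nf_word_gens[OF p(1,2)] by (intro lclass_smonom_in_lpa_comp) auto
  moreover have "cl (smonom 1 (nf_word r u b k)) \<in> S (inv\<^bsub>G\<^esub> g)"
    using deg nf_word_gens[OF p(2,1)] word_deg_nf_word_swap[OF p(1,2)]
    by (intro lclass_smonom_in_lpa_comp) auto
  moreover have "cl (smonom 1 (nf_word r v k b)) \<otimes>\<^bsub>L\<^esub> cl (smonom 1 (nf_word r u b k))
      = cl (smonom 1 (nf_word r v k b @ nf_word r u b k))"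
    using p by (simp add: lclass_smonom_nf_word_mult)
  moreover have "\<dots> = e"
    unfolding e by (rule lclass_smonom_cong) (use p cong_nf_word_mult nf_word_gens in auto)
  ultimately show "e \<in> set_prod L (S g) (S (inv\<^bsub>G\<^esub> g))"
    by (metis sp_prod)
qed

lemma nf_word_has_left_local_unit:
  assumes p: "path v a" "path u b" "path_end r v a = path_end r u b"
    and deg: "word_deg G d (nf_word r v a b) = g"
  shows "lpa.has_left_local_unit (nf_idempotents g) (cl (smonom c (nf_word r v a b)))"
proof -
  have "(v, a) \<in> nf_heads g" using p deg unfolding nf_heads_def by blast
  then obtain k where k: "(v, k) \<in> minimal_nf_heads g" "prefix k a"
    using minimal_nf_head_prefix by blast
  then obtain a' where a: "a = k @ a'" by (auto simp: prefix_def)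
  let ?e = "cl (smonom 1 (nf_word r v k k))"
  have pk: "path v k" using k(1) by (rule minimal_nf_headsD)
  have "?e \<in> nf_idempotents g" using k(1) unfolding nf_idempotents_def by force
  moreover have "?e \<otimes>\<^bsub>L\<^esub> cl (smonom c (nf_word r v a b)) = cl (smonom c (nf_word r v a b))"
  proof -
    have "?e \<otimes>\<^bsub>L\<^esub> cl (smonom c (nf_word r v a b)) = cl (smonom c (nf_word r v k k @ nf_word r v a b))"
      using pk p by (simp add: lclass_smonom_nf_word_mult)
    also have "\<dots> = cl (smonom c (nf_word r v a b))"
      using p pk a cong_nf_idem_mult_extension[of v k a' u b] nf_word_gens
      by (intro lclass_smonom_cong) auto
    finally show ?thesis .
  qed
  ultimately show ?thesis
    using pk lclass_smonom_nf_word_in_carrier unfolding lpa.has_left_local_unit_def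
    by (metis lpa.in_joins_singleton)
qed

lemma nf_word_has_right_local_unit:
  assumes p: "path v a" "path u b" "path_end r v a = path_end r u b"
    and deg: "word_deg G d (nf_word r v a b) = inv\<^bsub>G\<^esub> g" and g: "g \<in> carrier G"
  shows "lpa.has_right_local_unit (nf_idempotents g) (cl (smonom c (nf_word r v a b)))"
proof -
  have "word_deg G d (nf_word r u b a) = g"
    using word_deg_nf_word_swap[OF p(1,2)] deg g by simp
  then have "(u, b) \<in> nf_heads g" using p unfolding nf_heads_def by force
  then obtain k where k: "(u, k) \<in> minimal_nf_heads g" "prefix k b"
    using minimal_nf_head_prefix by blast
  then obtain b' where b: "b = k @ b'" by (auto simp: prefix_def)
  let ?e = "cl (smonom 1 (nf_word r u k k))"
  have pk: "path u k" using k(1) by (rule minimal_nf_headsD)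
  have "?e \<in> nf_idempotents g" using k(1) unfolding nf_idempotents_def by force
  moreover have "cl (smonom c (nf_word r v a b)) \<otimes>\<^bsub>L\<^esub> ?e = cl (smonom c (nf_word r v a b))"
  proof -
    have "cl (smonom c (nf_word r v a b)) \<otimes>\<^bsub>L\<^esub> ?e = cl (smonom c (nf_word r v a b @ nf_word r u k k))"
      using pk p by (simp add: lclass_smonom_nf_word_mult)
    also have "\<dots> = cl (smonom c (nf_word r v a b))"
      using p pk b cong_nf_mult_idem_extension[of u k b' v a] nf_word_gens
      by (intro lclass_smonom_cong) auto
    finally show ?thesis .
  qed
  ultimately show ?thesis
    using pk lclass_smonom_nf_word_in_carrier unfolding lpa.has_right_local_unit_def
    by (metis lpa.in_joins_singleton)
qed

lemma lpa_comp_has_left_local_unit: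
  assumes "x \<in> S g"
  shows "lpa.has_left_local_unit (nf_idempotents g) x"
proof -
  have "S g \<subseteq> {x \<in> carrier L. lpa.has_left_local_unit (nf_idempotents g) x}"
  proof (rule lpa_comp_subsetI)
    fix c w assume w: "w \<noteq> []" "set w \<subseteq> lgens E0 E1" "word_deg G d w = g"
    have "lpa.has_left_local_unit (nf_idempotents g) (cl (smonom c w))"
      using lclass_smonom_normal_form[OF w, of c]
    proof
      assume "\<exists>v a u b. path v a \<and> path u b \<and> path_end r v a = path_end r u b
        \<and> word_deg G d (nf_word r v a b) = g \<and> cl (smonom c w) = cl (smonom c (nf_word r v a b))"
      then show ?thesis using nf_word_has_left_local_unit by auto
    qed (simp add: lpa.has_left_local_unit_zero)
    then show "cl (smonom c w) \<in> {x \<in> carrier L. lpa.has_left_local_unit (nf_idempotents g) x}"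
      using w by simp
  qed (auto simp: lpa.has_left_local_unit_zero lpa.has_left_local_unit_add nf_idempotents_orthogonal)
  then show ?thesis using assms by blast
qed

lemma lpa_comp_has_right_local_unit:
  assumes "g \<in> carrier G" "y \<in> S (inv\<^bsub>G\<^esub> g)"
  shows "lpa.has_right_local_unit (nf_idempotents g) y"
proof -
  have "S (inv\<^bsub>G\<^esub> g) \<subseteq> {y \<in> carrier L. lpa.has_right_local_unit (nf_idempotents g) y}"
  proof (rule lpa_comp_subsetI)
    fix c w assume w: "w \<noteq> []" "set w \<subseteq> lgens E0 E1" "word_deg G d w = inv\<^bsub>G\<^esub> g"
    have "lpa.has_right_local_unit (nf_idempotents g) (cl (smonom c w))"
      using lclass_smonom_normal_form[OF w, of c]
    proof
      assume "\<exists>v a u b. path v a \<and> path u b \<and> path_end r v a = path_end r u b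
        \<and> word_deg G d (nf_word r v a b) = inv\<^bsub>G\<^esub> g \<and> cl (smonom c w) = cl (smonom c (nf_word r v a b))"
      then show ?thesis using nf_word_has_right_local_unit assms(1) by auto
    qed (simp add: lpa.has_right_local_unit_zero)
    then show "cl (smonom c w) \<in> {y \<in> carrier L. lpa.has_right_local_unit (nf_idempotents g) y}"
      using w by simp
  qed (auto simp: lpa.has_right_local_unit_zero lpa.has_right_local_unit_add nf_idempotents_orthogonal)
  then show ?thesis using assms(2) by blast
qed

lemma lpa_comp_triple_product:
  assumes g: "g \<in> carrier G"
  shows "set_prod L (set_prod L (S g) (S (inv\<^bsub>G\<^esub> g))) (S g) = S g"
proof
  have "x \<otimes>\<^bsub>L\<^esub> y \<in> S g" if "x \<in> set_prod L (S g) (S (inv\<^bsub>G\<^esub> g))" "y \<in> S g" for x y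
    using lpa_comp_mult[OF set_prod_lpa_comp[THEN subsetD, OF that(1)] that(2)] g
    by (simp add: G.m_assoc)
  then show "set_prod L (set_prod L (S g) (S (inv\<^bsub>G\<^esub> g))) (S g) \<subseteq> S g"
    by (intro set_prod_subset lpa_comp_zero lpa_comp_add)
next
  let ?T = "set_prod L (set_prod L (S g) (S (inv\<^bsub>G\<^esub> g))) (S g)"
  show "S g \<subseteq> ?T"
  proof (rule lpa_comp_subsetI)
    fix c w assume w: "w \<noteq> []" "set w \<subseteq> lgens E0 E1" "word_deg G d w = g"
    from lclass_smonom_normal_form[OF w, of c] show "cl (smonom c w) \<in> ?T"
    proof
      assume "\<exists>v a u b. path v a \<and> path u b \<and> path_end r v a = path_end r u b
        \<and> word_deg G d (nf_word r v a b) = g \<and> cl (smonom c w) = cl (smonom c (nf_word r v a b))"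
      then obtain v a u b where p: "path v a" "path u b" "path_end r v a = path_end r u b"
        and deg: "word_deg G d (nf_word r v a b) = g"
        and eq: "cl (smonom c w) = cl (smonom c (nf_word r v a b))"
        by blast
      let ?x = "cl (smonom c (nf_word r v a b))" and ?y = "cl (smonom 1 (nf_word r u b a))"
        and ?z = "cl (smonom 1 (nf_word r v a b))"
      have "(?x \<otimes>\<^bsub>L\<^esub> ?y) \<otimes>\<^bsub>L\<^esub> ?z
          = cl (smonom c (nf_word r v a b @ nf_word r u b a @ nf_word r v a b))"
        using p by (simp add: lclass_smonom_nf_word_mult lclass_smonom_mult nf_word_gens)
      also have "\<dots> = ?x"
        by (rule lclass_smonom_cong) (use p cong_nf_word_triple nf_word_gens in auto)
      finally have "?x = (?x \<otimes>\<^bsub>L\<^esub> ?y) \<otimes>\<^bsub>L\<^esub> ?z" ..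
      moreover have "?x \<in> S g" "?z \<in> S g" "?y \<in> S (inv\<^bsub>G\<^esub> g)"
        using deg nf_word_gens[OF p(1,2)] nf_word_gens[OF p(2,1)] word_deg_nf_word_swap[OF p(1,2)]
        by (auto intro!: lclass_smonom_in_lpa_comp)
      ultimately show ?thesis
        using eq by (metis sp_prod)
    qed (simp add: sp_zero)
  qed (auto intro: sp_zero sp_add)
qed

theorem lpa_virtually_epsilon_strong: "virtually_epsilon_strong G L S"
  unfolding virtually_epsilon_strong_def
proof (intro ballI conjI)
  fix g assume g: "g \<in> carrier G"
  show "set_prod L (set_prod L (S g) (S (inv\<^bsub>G\<^esub> g))) (S g) = S g"
    by (rule lpa_comp_triple_product[OF g])
  show "has_enough_idempotents L (set_prod L (S g) (S (inv\<^bsub>G\<^esub> g)))"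
  proof (rule lpa.has_enough_idempotentsI[OF nf_idempotents_orthogonal nf_idempotents_subset])
    fix x assume "x \<in> set_prod L (S g) (S (inv\<^bsub>G\<^esub> g))"
    then show "lpa.has_local_unit (nf_idempotents g) x"
      using lpa.set_prod_has_local_unit[OF nf_idempotents_orthogonal lpa_comp_subset_carrier
          lpa_comp_subset_carrier lpa_comp_has_left_local_unit lpa_comp_has_right_local_unit[OF g]]
      by blast
  qed
qed

end

theorem proposition4p3:
  fixes G :: "('g, 'b) monoid_scheme"
    and E0 :: "'v set" and E1 :: "'e set" and s r :: "'e \<Rightarrow> 'v"
    and d :: "'e \<Rightarrow> 'g"
  assumes "group G"
    and "s ` E1 \<subseteq> E0" and "r ` E1 \<subseteq> E0"
    and "d ` E1 \<subseteq> carrier G"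
  shows "virtually_epsilon_strong G
           (lpa E0 E1 s r :: (('v, 'e) lgen list \<Rightarrow> 'r::{ring, monoid_mult}) set ring)
           (lpa_comp G E0 E1 s r d)"
proof -
  interpret graded_leavitt_graph E0 E1 s r "lpa_ideal E0 E1 s r :: (('v, 'e) lgen list \<Rightarrow> 'r) set" G d
    using assms by (simp add: graded_leavitt_graph_def leavitt_graph_def graded_leavitt_graph_axioms_def)
  show ?thesis by (rule lpa_virtually_epsilon_strong)
qed

end
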